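(* Let $k\ge1$, let $A_k$ be the matrix defined below, let $\mathbf{b}\in\mathbb{Z}^{2k+1}$ and $G=G_{A_k,\mathbf{b},\mathcal{G}(A_k)}$. Then for any two vertices $\mathbf{u}\in C_s(\mathbf{b})$, $\mathbf{u}'\in C_{s'}(\mathbf{b})$ with $s\neq s'$ that are adjacent in $G$, there exist $\delta(G)$ pairwise edge-disjoint paths in $G$ connecting them.
   Context: $I_k$ is the $k\times k$ identity, $\mathbf{1}_k$ the all-ones vector in $\mathbb{Z}^k$. Define $$A_k=\begin{pmatrix} I_k & I_k & 0 & 0 & -\mathbf{1}_k & \mathbf{0}\\ 0&0&I_k&I_k&\mathbf{0}&-\mathbf{1}_k\\ 0&0&0&0&1&1\end{pmatrix}\in\mathbb{Z}^{(2k+1)\times(4k+2)}$$ (zero blocks of appropriate sizes; last two columns are single columns). Fiber: $\mathcal{F}_A(\mathbf{b})=\{\mathbf{u}\in\mathbb{Z}^n_{\ge0}:A\mathbf{u}=\mathbf{b}\}$; for $\mathcal{M}\subset\mathbb{Z}^n$, $G_{A,\mathbf{b},\mathcal{M}}$ is the graph on $\mathcal{F}_A(\mathbf{b})$ with distinct $\mathbf{u},\mathbf{v}$ adjacent iff $\mathbf{u}-\mathbf{v}\in\pm\mathcal{M}$. The Graver basis $\mathcal{G}(A)$ is the set of $\sqsubseteq$-minimal elements of $(\ker A\cap\mathbb{Z}^n)\setminus\{\mathbf{0}\}$, where $\mathbf{u}\sqsubseteq\mathbf{v}$ iff $u_iv_i\ge0$ and $|u_i|\le|v_i|$ for all $i$.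 $\delta$ is the minimal vertex degree. For an integer $s$, $C_s(\mathbf{b}):=\{\mathbf{u}\in\mathcal{F}_{A_k}(\mathbf{b}):u_{4k+1}=s\}$ (the "boxes" of the fiber). *)

theory Defs
  imports Main
begin

text \<open>Integer vectors in Z^n are modelled as functions nat => int that vanish
  outside the index range {0..<n} (indices are 0-based). Matrices are functions
  row => column => int.\<close>

definition zvecs :: "nat \<Rightarrow> (nat \<Rightarrow> int) set" where
  "zvecs n = {u. \<forall>i\<ge>n. u i = 0}"

definition matvec :: "nat \<Rightarrow> (nat \<Rightarrow> nat \<Rightarrow> int) \<Rightarrow> (nat \<Rightarrow> int) \<Rightarrow> nat \<Rightarrow> int" where
  "matvec n M u i = (\<Sum>j<n. M i j * u j)"

text \<open>The matrix A_k of size (2k+1) x (4k+2), 0-based indices.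
  Rows i<k: e_i + e_(k+i) - e_(4k). Rows k+i (i<k): e_(2k+i) + e_(3k+i) - e_(4k+1).
  Row 2k: e_(4k) + e_(4k+1).\<close>
definition Ak :: "nat \<Rightarrow> nat \<Rightarrow> nat \<Rightarrow> int" where
  "Ak k i j =
     (if i < k then
        (if j = i \<or> j = k + i then 1 else if j = 4*k then -1 else 0)
      else if i < 2*k then
        (if j = k + i \<or> j = 2*k + i then 1 else if j = 4*k + 1 then -1 else 0)
      else if i = 2*k then
        (if j = 4*k \<or> j = 4*k + 1 then 1 else 0)
      else 0)"

definition intker :: "nat \<Rightarrow> nat \<Rightarrow> (nat \<Rightarrow> nat \<Rightarrow> int) \<Rightarrow> (nat \<Rightarrow> int) set" where
  "intker m n M = {u \<in> zvecs n. \<forall>i<m. matvec n M u i = 0}"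

definition conf_le :: "(nat \<Rightarrow> int) \<Rightarrow> (nat \<Rightarrow> int) \<Rightarrow> bool" where
  "conf_le u v \<longleftrightarrow> (\<forall>i. u i * v i \<ge> 0 \<and> \<bar>u i\<bar> \<le> \<bar>v i\<bar>)"

definition graver :: "nat \<Rightarrow> nat \<Rightarrow> (nat \<Rightarrow> nat \<Rightarrow> int) \<Rightarrow> (nat \<Rightarrow> int) set" where
  "graver m n M = {u \<in> intker m n M - {\<lambda>_. 0}.
      \<not> (\<exists>v \<in> intker m n M - {\<lambda>_. 0}. conf_le v u \<and> v \<noteq> u)}"

definition fiber :: "nat \<Rightarrow> nat \<Rightarrow> (nat \<Rightarrow> nat \<Rightarrow> int) \<Rightarrow> (nat \<Rightarrow> int) \<Rightarrow> (nat \<Rightarrow> int) set" where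
  "fiber m n M b = {u \<in> zvecs n. (\<forall>i. u i \<ge> 0) \<and> (\<forall>i<m. matvec n M u i = b i)}"

definition fadj :: "(nat \<Rightarrow> int) set \<Rightarrow> (nat \<Rightarrow> int) set \<Rightarrow> (nat \<Rightarrow> int) \<Rightarrow> (nat \<Rightarrow> int) \<Rightarrow> bool" where
  "fadj F Mv u v \<longleftrightarrow> u \<in> F \<and> v \<in> F \<and> u \<noteq> v \<and> ((\<lambda>i. u i - v i) \<in> Mv \<or> (\<lambda>i. v i - u i) \<in> Mv)"

definition gdegree :: "(nat \<Rightarrow> int) set \<Rightarrow> (nat \<Rightarrow> int) set \<Rightarrow> (nat \<Rightarrow> int) \<Rightarrow> nat" where
  "gdegree F Mv u = card {v. fadj F Mv u v}"

definition min_degree :: "(nat \<Rightarrow> int) set \<Rightarrow> (nat \<Rightarrow> int) set \<Rightarrow> nat" where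
  "min_degree F Mv = Min (gdegree F Mv ` F)"

definition gpath :: "(nat \<Rightarrow> int) set \<Rightarrow> (nat \<Rightarrow> int) set \<Rightarrow> (nat \<Rightarrow> int) list
     \<Rightarrow> (nat \<Rightarrow> int) \<Rightarrow> (nat \<Rightarrow> int) \<Rightarrow> bool" where
  "gpath F Mv p u v \<longleftrightarrow> p \<noteq> [] \<and> hd p = u \<and> last p = v \<and> distinct p \<and> set p \<subseteq> F \<and>
     (\<forall>i. Suc i < length p \<longrightarrow> fadj F Mv (p ! i) (p ! Suc i))"

definition path_edges :: "'a list \<Rightarrow> 'a set set" where
  "path_edges p = {{p ! i, p ! Suc i} | i. Suc i < length p}"

text \<open>The box C_s(b): fiber elements whose (4k+1)-st coordinate (0-based index 4k) equals s.\<close>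
definition box :: "nat \<Rightarrow> (nat \<Rightarrow> int) \<Rightarrow> int \<Rightarrow> (nat \<Rightarrow> int) set" where
  "box k b s = {u \<in> fiber (2*k+1) (4*k+2) (Ak k) b. u (4*k) = s}"

end

theory Submission
  imports Defs
begin

text \<open>The Graver basis of \<open>A_k\<close> consists of the w-moves \<open>\<plusminus>(e_j - e_(j+k))\<close> inside one
  x/y or z/w pair, and the u-moves \<open>\<plusminus>h\<close>, where \<open>h\<close> has entries \<open>1, -1\<close> in the last two
  coordinates, a single \<open>1\<close> in every x/y pair and a single \<open>-1\<close> in every z/w pair. Only
  u-moves change the box, so \<open>u' = u + h\<close> for a u-move \<open>h\<close> (up to swapping \<open>u, u'\<close>).
  Vertices obtained from \<open>u\<close> by \<open>t \<in> {0,1}\<close> copies of \<open>h\<close> and unit shifts inside the pairs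
  give \<open>2^k + k + |X| + |Z| + min |P| |Q|\<close> paths from \<open>u\<close> to \<open>u'\<close> (the sets counting the
  pairs where the relevant entry of \<open>u\<close> has room), and a signature recording \<open>t\<close> and the
  shifts separates their edges. Conversely, emptying the x- and z-entries of \<open>u\<close> (resp. \<open>u'\<close>)
  and exhausting one pair or last coordinate yields a vertex of degree at most
  \<open>2^k + k\<close> plus its number of occupied x/y (resp. z/w) pairs, so \<open>\<delta>\<close> does not exceed the
  number of paths.\<close>

abbreviation fiber_A :: "nat \<Rightarrow> (nat \<Rightarrow> int) \<Rightarrow> (nat \<Rightarrow> int) set" where
  "fiber_A k b \<equiv> fiber (2*k+1) (4*k+2) (Ak k) b"

abbreviation ker_A :: "nat \<Rightarrow> (nat \<Rightarrow> int) set" where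
  "ker_A k \<equiv> intker (2*k+1) (4*k+2) (Ak k)"

abbreviation graver_A :: "nat \<Rightarrow> (nat \<Rightarrow> int) set" where
  "graver_A k \<equiv> graver (2*k+1) (4*k+2) (Ak k)"

section \<open>The equations of \<open>A_k\<close>\<close>

text \<open>Coordinates \<open>i, k+i, 2k+i, 3k+i\<close> (\<open>i < k\<close>) form the blocks x, y, z, w; \<open>t = 4k\<close> and
  \<open>t' = 4k+1\<close> are the last two.\<close>

lemma matvec_Ak_xy_row:
  assumes "i < k"
  shows "matvec (4*k+2) (Ak k) v i = v i + v (k+i) - v (4*k)"
proof -
  have "Ak k i j * v j = (if j = i then v i else 0) + (if j = k+i then v (k+i) else 0)
      - (if j = 4*k then v (4*k) else 0)" for j
    using assms by (auto simp: Ak_def)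
  then show ?thesis
    using assms by (simp add: matvec_def sum.distrib sum_subtractf)
qed

lemma matvec_Ak_zw_row:
  assumes "i < k"
  shows "matvec (4*k+2) (Ak k) v (k+i) = v (2*k+i) + v (3*k+i) - v (4*k+1)"
proof -
  have "Ak k (k+i) j * v j = (if j = 2*k+i then v (2*k+i) else 0) + (if j = 3*k+i then v (3*k+i) else 0)
      - (if j = 4*k+1 then v (4*k+1) else 0)" for j
    using assms by (auto simp: Ak_def)
  then show ?thesis
    using assms by (simp add: matvec_def sum.distrib sum_subtractf)
qed

lemma matvec_Ak_last_row: "matvec (4*k+2) (Ak k) v (2*k) = v (4*k) + v (4*k+1)"
proof -
  have "Ak k (2*k) j * v j = (if j = 4*k then v (4*k) else 0) + (if j = 4*k+1 then v (4*k+1) else 0)" for j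
    by (auto simp: Ak_def)
  then show ?thesis
    by (simp add: matvec_def sum.distrib)
qed

lemma all_less_two_mult_Suc_iff:
  "(\<forall>i::nat<2*k+1. P i) \<longleftrightarrow> (\<forall>i<k. P i) \<and> (\<forall>i<k. P (k+i)) \<and> P (2*k)"
proof (intro iffI allI impI)
  fix i assume all: "(\<forall>i<k. P i) \<and> (\<forall>i<k. P (k+i)) \<and> P (2*k)" and "i < 2*k+1"
  then consider "i < k" | "i = k + (i-k)" "i - k < k" | "i = 2*k" by linarith
  then show "P i" using all by cases metis+
qed auto

lemma Ak_system_iff:
  "(\<forall>i<2*k+1. matvec (4*k+2) (Ak k) v i = b i) \<longleftrightarrow>
    (\<forall>i<k. v i + v (k+i) - v (4*k) = b i \<and> v (2*k+i) + v (3*k+i) - v (4*k+1) = b (k+i)) \<and>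
    v (4*k) + v (4*k+1) = b (2*k)"
  unfolding all_less_two_mult_Suc_iff
  using matvec_Ak_xy_row[of _ k v] matvec_Ak_zw_row[of _ k v] matvec_Ak_last_row[of k v] by auto

lemma fiber_A_iff:
  "v \<in> fiber_A k b \<longleftrightarrow>
    v \<in> zvecs (4*k+2) \<and> (\<forall>n. v n \<ge> 0) \<and>
    (\<forall>i<k. v i + v (k+i) - v (4*k) = b i \<and> v (2*k+i) + v (3*k+i) - v (4*k+1) = b (k+i)) \<and>
    v (4*k) + v (4*k+1) = b (2*k)"
  unfolding fiber_def Ak_system_iff by auto

lemma ker_A_iff:
  "v \<in> ker_A k \<longleftrightarrow>
    v \<in> zvecs (4*k+2) \<and>
    (\<forall>i<k. v i + v (k+i) = v (4*k) \<and> v (2*k+i) + v (3*k+i) = v (4*k+1)) \<and>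
    v (4*k) + v (4*k+1) = 0"
  using Ak_system_iff[of k v "\<lambda>_. 0"] unfolding intker_def by auto

lemma Ak_coord_cases:
  fixes n k :: nat
  assumes "n < 4*k+2"
  obtains (x) i where "i < k" "n = i" | (y) i where "i < k" "n = k+i"
    | (z) i where "i < k" "n = 2*k+i" | (w) i where "i < k" "n = 3*k+i"
    | (t) "n = 4*k" | (t') "n = 4*k+1"
proof -
  consider "n < k" | "k \<le> n \<and> n < 2*k" | "2*k \<le> n \<and> n < 3*k" | "3*k \<le> n \<and> n < 4*k"
    | "n = 4*k" | "n = 4*k+1"
    using assms by linarith
  then show ?thesis
  proof cases
    case 2 then show ?thesis using y[of "n-k"] by auto
  next
    case 3 then show ?thesis using z[of "n-2*k"] by auto
  next
    case 4 then show ?thesis using w[of "n-3*k"] by auto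
  qed (use x t t' in auto)
qed

lemma Ak_vec_eqI:
  fixes v h :: "nat \<Rightarrow> int"
  assumes "\<And>i. i < k \<Longrightarrow> v i = h i \<and> v (k+i) = h (k+i) \<and> v (2*k+i) = h (2*k+i) \<and> v (3*k+i) = h (3*k+i)"
    and "v (4*k) = h (4*k)" "v (4*k+1) = h (4*k+1)"
    and "\<And>n. n \<ge> 4*k+2 \<Longrightarrow> v n = h n"
  shows "v = h"
proof
  fix n show "v n = h n"
    by (cases "n < 4*k+2", cases rule: Ak_coord_cases[of n k]) (use assms in auto)
qed

lemma zvecs_eq_outside: "v \<in> zvecs n \<Longrightarrow> h \<in> zvecs n \<Longrightarrow> m \<ge> n \<Longrightarrow> v m = h m"
  by (simp add: zvecs_def)

section \<open>The Graver basis of \<open>A_k\<close>\<close>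

lemma graver_imp_intker: "h \<in> graver m n M \<Longrightarrow> h \<in> intker m n M"
  unfolding graver_def by blast

lemma graver_nonzero: "h \<in> graver m n M \<Longrightarrow> h \<noteq> (\<lambda>_. 0)"
  unfolding graver_def by blast

lemma graver_conf_le_eq:
  "h \<in> graver m n M \<Longrightarrow> v \<in> graver m n M \<Longrightarrow> conf_le v h \<Longrightarrow> v = h"
  unfolding graver_def by blast

lemma conf_le_unit_entry:
  assumes "conf_le v h" "\<bar>h n\<bar> \<le> 1"
  shows "v n = 0 \<or> v n = h n"
proof -
  have a: "v n * h n \<ge> 0" "\<bar>v n\<bar> \<le> \<bar>h n\<bar>" using assms(1) unfolding conf_le_def by auto
  consider "h n = 0" | "h n = 1" | "h n = -1" using assms(2) by linarith
  then show ?thesis by cases (use a in \<open>auto simp: mult_le_0_iff\<close>)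
qed

lemma intker_uminus: "v \<in> intker m n M \<Longrightarrow> (\<lambda>i. - v i) \<in> intker m n M"
  unfolding intker_def zvecs_def matvec_def by (auto simp: sum_negf)

lemma graver_uminus:
  assumes "h \<in> graver m n M"
  shows "(\<lambda>i. - h i) \<in> graver m n M"
proof -
  have h: "h \<in> intker m n M" "h \<noteq> (\<lambda>_. 0)"
    and min: "\<And>v. v \<in> intker m n M \<Longrightarrow> v \<noteq> (\<lambda>_. 0) \<Longrightarrow> conf_le v h \<Longrightarrow> v = h"
    using assms unfolding graver_def by auto
  have "v = (\<lambda>i. - h i)"
    if v: "v \<in> intker m n M" "v \<noteq> (\<lambda>_. 0)" "conf_le v (\<lambda>i. - h i)" for v
  proof -
    have "(\<lambda>i. - v i) \<noteq> (\<lambda>_. 0)" using v(2) by (metis add.inverse_neutral minus_minus)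
    moreover have "conf_le (\<lambda>i. - v i) h" using v(3) by (simp add: conf_le_def)
    ultimately have "(\<lambda>i. - v i) = h" using min intker_uminus[OF v(1)] by blast
    then show ?thesis by force
  qed
  moreover have "(\<lambda>i. - h i) \<noteq> (\<lambda>_. 0)" using h(2) by (metis add.inverse_neutral minus_minus)
  ultimately show ?thesis
    using intker_uminus[OF h(1)] unfolding graver_def by blast
qed

definition wmove :: "nat \<Rightarrow> nat \<Rightarrow> nat \<Rightarrow> int" where
  "wmove k j = (\<lambda>n. if n = j then 1 else if n = j + k then -1 else 0)"

definition is_wmove :: "nat \<Rightarrow> (nat \<Rightarrow> int) \<Rightarrow> bool" where
  "is_wmove k h \<longleftrightarrow>
     (\<exists>j. (j < k \<or> 2*k \<le> j \<and> j < 3*k) \<and> (h = wmove k j \<or> h = (\<lambda>n. - wmove k j n)))"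

definition is_umove :: "nat \<Rightarrow> (nat \<Rightarrow> int) \<Rightarrow> bool" where
  "is_umove k h \<longleftrightarrow> h \<in> zvecs (4*k+2) \<and> h (4*k) = 1 \<and> h (4*k+1) = -1 \<and>
     (\<forall>i<k. (h i = 1 \<and> h (k+i) = 0 \<or> h i = 0 \<and> h (k+i) = 1) \<and>
            (h (2*k+i) = -1 \<and> h (3*k+i) = 0 \<or> h (2*k+i) = 0 \<and> h (3*k+i) = -1))"

lemma is_wmove_uminus: "is_wmove k h \<Longrightarrow> is_wmove k (\<lambda>n. - h n)"
  unfolding is_wmove_def by auto

lemma is_wmove_last_zero: "is_wmove k h \<Longrightarrow> h (4*k) = 0"
  unfolding is_wmove_def wmove_def by auto

lemma umove_abs_le_1:
  assumes "is_umove k h" shows "\<bar>h n\<bar> \<le> 1"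
  by (cases "n < 4*k+2", cases rule: Ak_coord_cases[of n k])
     (use assms in \<open>auto simp: is_umove_def zvecs_def\<close>)

lemma umove_in_ker_A:
  assumes "is_umove k h" shows "h \<in> ker_A k"
proof -
  have "h i + h (k+i) = h (4*k) \<and> h (2*k+i) + h (3*k+i) = h (4*k+1)" if "i < k" for i
    using assms that unfolding is_umove_def by fastforce
  then show ?thesis using assms unfolding ker_A_iff is_umove_def by simp
qed

lemma umove_in_graver_A:
  assumes h: "is_umove k h" shows "h \<in> graver_A k"
proof -
  have U: "h \<in> zvecs (4*k+2)" "h (4*k) = 1" "h (4*k+1) = -1"
    "\<And>i. i<k \<Longrightarrow> (h i = 1 \<and> h (k+i) = 0 \<or> h i = 0 \<and> h (k+i) = 1) \<and>
            (h (2*k+i) = -1 \<and> h (3*k+i) = 0 \<or> h (2*k+i) = 0 \<and> h (3*k+i) = -1)"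
    using h unfolding is_umove_def by auto
  have "v = (\<lambda>_. 0) \<or> v = h" if v: "v \<in> ker_A k" "conf_le v h" for v
  proof -
    have small: "v n = 0 \<or> v n = h n" for n
      using conf_le_unit_entry[OF v(2) umove_abs_le_1[OF h]] .
    have vk: "v \<in> zvecs (4*k+2)"
      "\<And>i. i<k \<Longrightarrow> v i + v (k+i) = v (4*k) \<and> v (2*k+i) + v (3*k+i) = v (4*k+1)"
      "v (4*k) + v (4*k+1) = 0"
      using v(1) unfolding ker_A_iff by auto
    text \<open>Since every pair of \<open>h\<close> has exactly one nonzero entry, the value at \<open>4k\<close> decides all of \<open>v\<close>.\<close>
    consider "v (4*k) = 0" | "v (4*k) = 1" using small[of "4*k"] U(2) by auto
    then show ?thesis
    proof cases
      case 1
      have "v = (\<lambda>_. 0)"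
      proof (rule Ak_vec_eqI[where k=k])
        fix i assume i: "i < k"
        show "v i = 0 \<and> v (k+i) = 0 \<and> v (2*k+i) = 0 \<and> v (3*k+i) = 0"
          using vk(2)[OF i] vk(3) 1 U(4)[OF i] small[of i] small[of "k+i"] small[of "2*k+i"] small[of "3*k+i"]
          by auto
      qed (use 1 vk in \<open>auto simp: zvecs_def\<close>)
      then show ?thesis ..
    next
      case 2
      have "v = h"
      proof (rule Ak_vec_eqI[where k=k])
        fix i assume i: "i < k"
        show "v i = h i \<and> v (k+i) = h (k+i) \<and> v (2*k+i) = h (2*k+i) \<and> v (3*k+i) = h (3*k+i)"
          using vk(2)[OF i] vk(3) 2 U(2,3) U(4)[OF i] small[of i] small[of "k+i"] small[of "2*k+i"] small[of "3*k+i"]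
          by auto
      qed (use 2 vk U in \<open>auto simp: zvecs_def\<close>)
      then show ?thesis ..
    qed
  qed
  moreover have "h \<noteq> (\<lambda>_. 0)" using U(2) by auto
  ultimately show ?thesis using umove_in_ker_A[OF h] unfolding graver_def by blast
qed

lemma wmove_in_graver_A:
  assumes j: "j < k \<or> 2*k \<le> j \<and> j < 3*k"
  shows "wmove k j \<in> graver_A k"
proof -
  let ?h = "wmove k j"
  have hz: "?h \<in> zvecs (4*k+2)" using j by (auto simp: zvecs_def wmove_def)
  have hk: "?h \<in> ker_A k"
    unfolding ker_A_iff using j hz by (auto simp: wmove_def)
  have "v = (\<lambda>_. 0) \<or> v = ?h" if v: "v \<in> ker_A k" "conf_le v ?h" for v
  proof -
    have small: "v n = 0 \<or> v n = ?h n" for n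
      using conf_le_unit_entry[OF v(2)] by (simp add: wmove_def)
    then have out: "v n = 0" if "n \<noteq> j" "n \<noteq> j + k" for n
      using that by (metis wmove_def)
    have vk: "\<And>i. i<k \<Longrightarrow> v i + v (k+i) = v (4*k) \<and> v (2*k+i) + v (3*k+i) = v (4*k+1)"
      using v(1) unfolding ker_A_iff by auto
    have t: "v (4*k) = 0" "v (4*k+1) = 0" using out j by auto
    have pair: "v j + v (j+k) = 0"
    proof (cases "j < k")
      case True then show ?thesis using vk[of j] t by (simp add: add.commute)
    next
      case False
      then obtain i where i: "i < k" "j = 2*k+i" using j by (intro that[of "j - 2*k"]) auto
      moreover have "j + k = 3*k+i" using i by simp
      ultimately show ?thesis using vk[of i] t by simp
    qed
    consider "v j = 0" | "v j = 1" using small[of j] by (auto simp: wmove_def)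
    then show ?thesis
    proof cases
      case 1
      then have "v = (\<lambda>_. 0)" using pair out by (metis add_0)
      then show ?thesis ..
    next
      case 2
      then have "v = ?h" using pair out by (auto simp: fun_eq_iff wmove_def)
      then show ?thesis ..
    qed
  qed
  moreover have "?h \<noteq> (\<lambda>_. 0)" by (auto simp: fun_eq_iff wmove_def)
  ultimately show ?thesis using hk unfolding graver_def by blast
qed

lemma is_wmove_in_graver_A: "is_wmove k h \<Longrightarrow> h \<in> graver_A k"
  using wmove_in_graver_A graver_uminus unfolding is_wmove_def by blast

lemma graver_A_umove_if_pos:
  assumes h: "h \<in> graver_A k" and t: "h (4*k) > 0"
  shows "is_umove k h"
proof -
  have hk: "\<And>i. i<k \<Longrightarrow> h i + h (k+i) = h (4*k) \<and> h (2*k+i) + h (3*k+i) = h (4*k+1)"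
      "h (4*k) + h (4*k+1) = 0"
    using graver_imp_intker[OF h] unfolding ker_A_iff by auto
  text \<open>The sign pattern of \<open>h\<close> defines a u-move below \<open>h\<close>; by minimality it is \<open>h\<close> itself.\<close>
  define v where "v = (\<lambda>n. if n < k then (if h n > 0 then 1 else 0)
      else if n < 2*k then (if h (n-k) > 0 then 0 else 1)
      else if n < 3*k then (if h n < 0 then -1 else 0)
      else if n < 4*k then (if h (n-k) < 0 then 0 else -1)
      else if n = 4*k then 1 else if n = 4*k+1 then -1 else (0::int))"
  have v_x: "v i = (if h i > 0 then 1 else 0)"
    and v_y: "v (k+i) = (if h i > 0 then 0 else 1)"
    and v_z: "v (2*k+i) = (if h (2*k+i) < 0 then -1 else 0)"
    and v_w: "v (3*k+i) = (if h (2*k+i) < 0 then 0 else -1)" if "i < k" for i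
    using that by (simp_all add: v_def)
  have v_t: "v (4*k) = 1" "v (4*k+1) = -1"
    and v_out: "\<And>n. n \<ge> 4*k+2 \<Longrightarrow> v n = 0"
    by (simp_all add: v_def)
  have "is_umove k v" unfolding is_umove_def zvecs_def using v_x v_y v_z v_w v_t v_out by auto
  moreover have "conf_le v h" unfolding conf_le_def
  proof
    fix n show "0 \<le> v n * h n \<and> \<bar>v n\<bar> \<le> \<bar>h n\<bar>"
    proof (cases "n < 4*k+2")
      case True then show ?thesis
      proof (cases rule: Ak_coord_cases[of n k])
        case (x i) then show ?thesis using v_x[of i] by auto
      next
        case (y i) then show ?thesis using v_y[of i] hk(1)[of i] t by auto
      next
        case (z i) then show ?thesis using v_z[of i] by (auto simp: mult_le_0_iff)
      next
        case (w i) then show ?thesis using v_w[of i] hk(1)[of i] hk(2) t by auto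
      next
        case t then show ?thesis using v_t \<open>h (4*k) > 0\<close> by auto
      next
        case t' then show ?thesis using v_t \<open>h (4*k) > 0\<close> hk(2) by auto
      qed
    qed (simp add: v_out)
  qed
  ultimately show ?thesis using graver_conf_le_eq[OF h umove_in_graver_A] by metis
qed

lemma graver_A_wmove_if_pair:
  assumes h: "h \<in> graver_A k" and j: "j < k \<or> 2*k \<le> j \<and> j < 3*k"
    and hj: "h j \<noteq> 0" and hjk: "h (j+k) = - h j"
  shows "is_wmove k h"
proof -
  define v where "v = (if h j > 0 then wmove k j else (\<lambda>n. - wmove k j n))"
  have "is_wmove k v" unfolding is_wmove_def v_def using j by auto
  moreover have "conf_le v h" unfolding conf_le_def
  proof
    fix n
    have "k > 0" using j by linarith
    then consider "n = j" | "n = j + k" "n \<noteq> j" | "n \<noteq> j" "n \<noteq> j + k" by blast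
    then show "0 \<le> v n * h n \<and> \<bar>v n\<bar> \<le> \<bar>h n\<bar>"
      by cases (use hj hjk in \<open>auto simp: v_def wmove_def mult_le_0_iff\<close>)
  qed
  ultimately show ?thesis using graver_conf_le_eq[OF h is_wmove_in_graver_A] by metis
qed

lemma graver_A_cases:
  assumes h: "h \<in> graver_A k"
  shows "is_wmove k h \<or> is_umove k h \<or> is_umove k (\<lambda>n. - h n)"
proof -
  have hk: "h \<in> zvecs (4*k+2)"
      "\<And>i. i<k \<Longrightarrow> h i + h (k+i) = h (4*k) \<and> h (2*k+i) + h (3*k+i) = h (4*k+1)"
      "h (4*k) + h (4*k+1) = 0"
    using graver_imp_intker[OF h] unfolding ker_A_iff by auto
  consider "h (4*k) > 0" | "h (4*k) < 0" | "h (4*k) = 0" by linarith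
  then show ?thesis
  proof cases
    case 1 then show ?thesis using graver_A_umove_if_pos[OF h] by blast
  next
    case 2 then show ?thesis using graver_A_umove_if_pos[OF graver_uminus[OF h]] by auto
  next
    case 3
    have xy: "is_wmove k h" if "i < k" "h i \<noteq> 0 \<or> h (k+i) \<noteq> 0" for i
    proof -
      have "h (i+k) = - h i" using hk(2)[OF that(1)] 3 by (simp add: add.commute)
      moreover have "h i \<noteq> 0" using that(2) hk(2)[OF that(1)] 3 by auto
      ultimately show ?thesis using graver_A_wmove_if_pair[OF h, of i] that(1) by blast
    qed
    have zw: "is_wmove k h" if "i < k" "h (2*k+i) \<noteq> 0 \<or> h (3*k+i) \<noteq> 0" for i
    proof -
      have "2*k+i+k = 3*k+i" by simp
      then have "h (2*k+i+k) = - h (2*k+i)" using hk(2)[OF that(1)] hk(3) 3 by simp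
      moreover have "h (2*k+i) \<noteq> 0" using that(2) hk(2)[OF that(1)] hk(3) 3 by auto
      ultimately show ?thesis using graver_A_wmove_if_pair[OF h, of "2*k+i"] that(1) by simp
    qed
    obtain n where n: "h n \<noteq> 0" using graver_nonzero[OF h] by (auto simp: fun_eq_iff)
    then have "n < 4*k+2" using hk(1) unfolding zvecs_def by (metis (mono_tags, lifting) mem_Collect_eq not_le)
    then show ?thesis
    proof (cases rule: Ak_coord_cases[of n k])
      case (x i) then show ?thesis using xy n by blast
    next
      case (y i) then show ?thesis using xy n by blast
    next
      case (z i) then show ?thesis using zw n by blast
    next
      case (w i) then show ?thesis using zw n by blast
    qed (use n 3 hk(3) in auto)
  qed
qed

section \<open>Vertices of small degree\<close>

lemma finite_fiber_A: "finite (fiber_A k b)"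
proof -
  define M where "M = (\<Sum>i<2*k+1. \<bar>b i\<bar>)"
  have two: "\<bar>b i\<bar> + \<bar>b j\<bar> \<le> M" if "i < 2*k+1" "j < 2*k+1" "i \<noteq> j" for i j
  proof -
    have "(\<Sum>n\<in>{i,j}. \<bar>b n\<bar>) \<le> (\<Sum>n<2*k+1. \<bar>b n\<bar>)"
      using that by (intro sum_mono2) auto
    then show ?thesis using \<open>i \<noteq> j\<close> by (simp add: M_def)
  qed
  have one: "\<bar>b (2*k)\<bar> \<le> M"
    unfolding M_def by (rule member_le_sum) auto
  have "fiber_A k b \<subseteq> {f. \<forall>x. (x \<in> {..<4*k+2} \<longrightarrow> f x \<in> {0..M}) \<and> (x \<notin> {..<4*k+2} \<longrightarrow> f x = 0)}"
  proof
    fix v assume "v \<in> fiber_A k b"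
    then have vv: "v \<in> zvecs (4*k+2)" "\<And>n. v n \<ge> 0"
      "\<And>i. i<k \<Longrightarrow> v i + v (k+i) - v (4*k) = b i \<and> v (2*k+i) + v (3*k+i) - v (4*k+1) = b (k+i)"
      "v (4*k) + v (4*k+1) = b (2*k)"
      unfolding fiber_A_iff by auto
    have "v n \<le> M" if "n < 4*k+2" for n
      using that
    proof (cases rule: Ak_coord_cases[of n k])
      case (x i) then show ?thesis
        using vv(2)[of "k+i"] vv(2)[of "4*k+1"] vv(3)[of i] vv(4) two[of i "2*k"] by auto
    next
      case (y i) then show ?thesis
        using vv(2)[of i] vv(2)[of "4*k+1"] vv(3)[of i] vv(4) two[of i "2*k"] by auto
    next
      case (z i) then show ?thesis
        using vv(2)[of "3*k+i"] vv(2)[of "4*k"] vv(3)[of i] vv(4) two[of "k+i" "2*k"] by auto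
    next
      case (w i) then show ?thesis
        using vv(2)[of "2*k+i"] vv(2)[of "4*k"] vv(3)[of i] vv(4) two[of "k+i" "2*k"] by auto
    qed (use vv(2)[of "4*k"] vv(2)[of "4*k+1"] vv(4) one in auto)
    then show "v \<in> {f. \<forall>x. (x \<in> {..<4*k+2} \<longrightarrow> f x \<in> {0..M}) \<and> (x \<notin> {..<4*k+2} \<longrightarrow> f x = 0)}"
      using vv(1,2) by (auto simp: zvecs_def)
  qed
  then show ?thesis
    by (rule finite_subset) (intro finite_set_of_finite_funs; simp)
qed

lemma fadj_sym: "fadj F M u v \<Longrightarrow> fadj F M v u"
  unfolding fadj_def by auto

lemma fadj_A_cases:
  assumes "fadj F (graver_A k) c v"
  shows "is_wmove k (\<lambda>n. v n - c n) \<or> is_umove k (\<lambda>n. v n - c n) \<or> is_umove k (\<lambda>n. c n - v n)"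
proof -
  have neg: "(\<lambda>n. - (c n - v n)) = (\<lambda>n. v n - c n)" "(\<lambda>n. - (v n - c n)) = (\<lambda>n. c n - v n)"
    by auto
  from assms have "(\<lambda>n. c n - v n) \<in> graver_A k \<or> (\<lambda>n. v n - c n) \<in> graver_A k"
    unfolding fadj_def by auto
  then show ?thesis
    using graver_A_cases[of "\<lambda>n. c n - v n" k] graver_A_cases[of "\<lambda>n. v n - c n" k]
      is_wmove_uminus[of k "\<lambda>n. c n - v n"]
    unfolding neg by blast
qed

lemma card_le_two_pow_if_inj_on_Pow:
  assumes "inj_on f S" "f ` S \<subseteq> Pow {..<k}"
  shows "card S \<le> 2^k"
  using card_inj_on_le[OF assms] by (simp add: card_Pow)

lemma card_wmove_neighbours_le:
  assumes c: "c \<in> fiber_A k b" and cz: "\<And>i. i < k \<Longrightarrow> c i = 0 \<and> c (2*k+i) = 0"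
  shows "card {v. fadj (fiber_A k b) (graver_A k) c v \<and> is_wmove k (\<lambda>n. v n - c n)}
    \<le> card {i. i<k \<and> c (k+i) > 0} + card {i. i<k \<and> c (3*k+i) > 0}"
proof -
  let ?X = "{i. i<k \<and> c (k+i) > 0}" and ?Z = "{i. i<k \<and> c (3*k+i) > 0}"
  let ?step = "\<lambda>j n. c n + wmove k j n"
  text \<open>A w-move out of \<open>c\<close> must raise the zero entry \<open>c j\<close> and lower \<open>c (j+k)\<close>.\<close>
  have "{v. fadj (fiber_A k b) (graver_A k) c v \<and> is_wmove k (\<lambda>n. v n - c n)}
      \<subseteq> ?step ` ?X \<union> (\<lambda>i. ?step (2*k+i)) ` ?Z"
  proof
    fix v assume "v \<in> {v. fadj (fiber_A k b) (graver_A k) c v \<and> is_wmove k (\<lambda>n. v n - c n)}"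
    then have v: "fadj (fiber_A k b) (graver_A k) c v" "is_wmove k (\<lambda>n. v n - c n)" by auto
    then have v_nonneg: "\<And>n. v n \<ge> 0" unfolding fadj_def fiber_A_iff by auto
    obtain j where j: "j < k \<or> 2*k \<le> j \<and> j < 3*k"
      and d: "(\<lambda>n. v n - c n) = wmove k j \<or> (\<lambda>n. v n - c n) = (\<lambda>n. - wmove k j n)"
      using v(2) unfolding is_wmove_def by blast
    have "c j = 0" using j cz[of j] cz[of "j - 2*k"] by (cases "j < k") auto
    then have "v j - c j \<noteq> - wmove k j j" using v_nonneg[of j] by (simp add: wmove_def)
    then have "(\<lambda>n. v n - c n) \<noteq> (\<lambda>n. - wmove k j n)" by metis
    then have "v = ?step j" using d by (auto simp: fun_eq_iff algebra_simps)
    moreover have "c (j+k) > 0"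
      using v_nonneg[of "j+k"] j \<open>v = ?step j\<close> by (auto simp: wmove_def)
    ultimately show "v \<in> ?step ` ?X \<union> (\<lambda>i. ?step (2*k+i)) ` ?Z"
      using j by (cases "j < k") (auto simp: add.commute intro!: image_eqI[of _ _ "j - 2*k"])
  qed
  then have "card {v. fadj (fiber_A k b) (graver_A k) c v \<and> is_wmove k (\<lambda>n. v n - c n)}
      \<le> card (?step ` ?X \<union> (\<lambda>i. ?step (2*k+i)) ` ?Z)"
    by (rule card_mono[rotated]) simp
  also have "\<dots> \<le> card ?X + card ?Z"
    by (rule order_trans[OF card_Un_le add_mono[OF card_image_le card_image_le]]) simp_all
  finally show ?thesis .
qed

lemma umove_diff_pair:
  assumes "is_umove k (\<lambda>n. v n - c n)" "i < k"
  shows "(v i - c i = 1 \<and> v (k+i) - c (k+i) = 0 \<or> v i - c i = 0 \<and> v (k+i) - c (k+i) = 1) \<and>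
    (v (2*k+i) - c (2*k+i) = -1 \<and> v (3*k+i) - c (3*k+i) = 0 \<or>
     v (2*k+i) - c (2*k+i) = 0 \<and> v (3*k+i) - c (3*k+i) = -1)"
  using assms unfolding is_umove_def by auto

lemma umove_diff_t:
  assumes "is_umove k (\<lambda>n. v n - c n)"
  shows "v (4*k) = c (4*k) + 1" "v (4*k+1) = c (4*k+1) - 1"
  using assms unfolding is_umove_def by auto

lemma card_up_neighbours_le:
  assumes cz: "\<And>i. i < k \<Longrightarrow> c (2*k+i) = 0"
  shows "card {v \<in> fiber_A k b. is_umove k (\<lambda>n. v n - c n)} \<le> 2^k"
proof (rule card_le_two_pow_if_inj_on_Pow)
  text \<open>The z/w half of an upward u-move out of \<open>c\<close> is forced, so the x-support determines it.\<close>
  show "inj_on (\<lambda>v. {i. i<k \<and> v i \<noteq> c i}) {v \<in> fiber_A k b. is_umove k (\<lambda>n. v n - c n)}"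
  proof (rule inj_onI)
    fix v v' assume v: "v \<in> {v \<in> fiber_A k b. is_umove k (\<lambda>n. v n - c n)}"
      and v': "v' \<in> {v \<in> fiber_A k b. is_umove k (\<lambda>n. v n - c n)}"
      and eq: "{i. i<k \<and> v i \<noteq> c i} = {i. i<k \<and> v' i \<noteq> c i}"
    have vz: "v \<in> zvecs (4*k+2)" "v' \<in> zvecs (4*k+2)" "\<And>n. v n \<ge> 0" "\<And>n. v' n \<ge> 0"
      using v v' unfolding fiber_A_iff by auto
    have U: "is_umove k (\<lambda>n. v n - c n)" "is_umove k (\<lambda>n. v' n - c n)" using v v' by auto
    show "v = v'"
    proof (rule Ak_vec_eqI[where k=k])
      fix i assume i: "i<k"
      have "v i \<noteq> c i \<longleftrightarrow> v' i \<noteq> c i" using eq i by blast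
      then show "v i = v' i \<and> v (k+i) = v' (k+i) \<and> v (2*k+i) = v' (2*k+i) \<and> v (3*k+i) = v' (3*k+i)"
        using umove_diff_pair[OF U(1) i] umove_diff_pair[OF U(2) i] cz[OF i] vz(3)[of "2*k+i"] vz(4)[of "2*k+i"] by auto
    qed (use umove_diff_t[OF U(1)] umove_diff_t[OF U(2)] zvecs_eq_outside[OF vz(1,2)] in auto)
  qed
qed auto

lemma card_down_neighbours_le:
  assumes cz: "\<And>i. i < k \<Longrightarrow> c i = 0"
  shows "card {v \<in> fiber_A k b. is_umove k (\<lambda>n. c n - v n)} \<le> 2^k"
proof (rule card_le_two_pow_if_inj_on_Pow)
  show "inj_on (\<lambda>v. {i. i<k \<and> v (2*k+i) \<noteq> c (2*k+i)}) {v \<in> fiber_A k b. is_umove k (\<lambda>n. c n - v n)}"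
  proof (rule inj_onI)
    fix v v' assume v: "v \<in> {v \<in> fiber_A k b. is_umove k (\<lambda>n. c n - v n)}"
      and v': "v' \<in> {v \<in> fiber_A k b. is_umove k (\<lambda>n. c n - v n)}"
      and eq: "{i. i<k \<and> v (2*k+i) \<noteq> c (2*k+i)} = {i. i<k \<and> v' (2*k+i) \<noteq> c (2*k+i)}"
    have vz: "v \<in> zvecs (4*k+2)" "v' \<in> zvecs (4*k+2)" "\<And>n. v n \<ge> 0" "\<And>n. v' n \<ge> 0"
      using v v' unfolding fiber_A_iff by auto
    have U: "is_umove k (\<lambda>n. c n - v n)" "is_umove k (\<lambda>n. c n - v' n)" using v v' by auto
    show "v = v'"
    proof (rule Ak_vec_eqI[where k=k])
      fix i assume i: "i<k"
      have "v (2*k+i) \<noteq> c (2*k+i) \<longleftrightarrow> v' (2*k+i) \<noteq> c (2*k+i)" using eq i by blast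
      then show "v i = v' i \<and> v (k+i) = v' (k+i) \<and> v (2*k+i) = v' (2*k+i) \<and> v (3*k+i) = v' (3*k+i)"
        using umove_diff_pair[OF U(1) i] umove_diff_pair[OF U(2) i] cz[OF i] vz(3)[of i] vz(4)[of i] by (smt (verit))
    qed (use umove_diff_t[OF U(1)] umove_diff_t[OF U(2)] zvecs_eq_outside[OF vz(1,2)] in auto)
  qed
qed auto

lemma no_down_neighbours:
  assumes "c (4*k) = 0 \<or> (\<exists>i<k. c i = 0 \<and> c (k+i) = 0)"
  shows "{v \<in> fiber_A k b. is_umove k (\<lambda>n. c n - v n)} = {}"
proof -
  have False if v: "v \<in> fiber_A k b" "is_umove k (\<lambda>n. c n - v n)" for v
  proof -
    have nonneg: "\<And>n. v n \<ge> 0" using v(1) unfolding fiber_A_iff by auto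
    from assms show False
    proof
      assume "c (4*k) = 0" then show False using umove_diff_t(1)[OF v(2)] nonneg[of "4*k"] by simp
    next
      assume "\<exists>i<k. c i = 0 \<and> c (k+i) = 0"
      then obtain i where "i < k" "c i = 0" "c (k+i) = 0" by blast
      then show False using umove_diff_pair[OF v(2) \<open>i < k\<close>] nonneg[of i] nonneg[of "k+i"] by simp
    qed
  qed
  then show ?thesis by blast
qed

lemma no_up_neighbours:
  assumes "c (4*k+1) = 0 \<or> (\<exists>i<k. c (2*k+i) = 0 \<and> c (3*k+i) = 0)"
  shows "{v \<in> fiber_A k b. is_umove k (\<lambda>n. v n - c n)} = {}"
proof -
  have False if v: "v \<in> fiber_A k b" "is_umove k (\<lambda>n. v n - c n)" for v
  proof -
    have nonneg: "\<And>n. v n \<ge> 0" using v(1) unfolding fiber_A_iff by auto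
    from assms show False
    proof
      assume "c (4*k+1) = 0" then show False using umove_diff_t(2)[OF v(2)] nonneg[of "4*k+1"] by simp
    next
      assume "\<exists>i<k. c (2*k+i) = 0 \<and> c (3*k+i) = 0"
      then obtain i where "i < k" "c (2*k+i) = 0" "c (3*k+i) = 0" by blast
      then show False
        using umove_diff_pair[OF v(2) \<open>i < k\<close>] nonneg[of "2*k+i"] nonneg[of "3*k+i"] by simp
    qed
  qed
  then show ?thesis by blast
qed

lemma corner_degree_le:
  assumes c: "c \<in> fiber_A k b" and cz: "\<And>i. i < k \<Longrightarrow> c i = 0 \<and> c (2*k+i) = 0"
    and stuck: "c (4*k) = 0 \<or> (\<exists>i<k. c (k+i) = 0) \<or> c (4*k+1) = 0 \<or> (\<exists>i<k. c (3*k+i) = 0)"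
  shows "gdegree (fiber_A k b) (graver_A k) c
    \<le> card {i. i<k \<and> c (k+i) > 0} + card {i. i<k \<and> c (3*k+i) > 0} + 2^k"
proof -
  let ?F = "fiber_A k b" and ?G = "graver_A k"
  define W where "W = {v. fadj ?F ?G c v \<and> is_wmove k (\<lambda>n. v n - c n)}"
  define Up where "Up = {v \<in> ?F. is_umove k (\<lambda>n. v n - c n)}"
  define Down where "Down = {v \<in> ?F. is_umove k (\<lambda>n. c n - v n)}"
  have "{v. fadj ?F ?G c v} \<subseteq> W \<union> (Up \<union> Down)"
  proof
    fix v assume "v \<in> {v. fadj ?F ?G c v}"
    then have "fadj ?F ?G c v" "v \<in> ?F" by (auto simp: fadj_def)
    then show "v \<in> W \<union> (Up \<union> Down)"
      using fadj_A_cases[of ?F k c v] unfolding W_def Up_def Down_def by blast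
  qed
  moreover have "W \<union> (Up \<union> Down) \<subseteq> ?F"
    unfolding W_def Up_def Down_def fadj_def by blast
  ultimately have "gdegree ?F ?G c \<le> card (W \<union> (Up \<union> Down))"
    unfolding gdegree_def by (intro card_mono finite_subset[OF _ finite_fiber_A])
  also have "\<dots> \<le> card W + card (Up \<union> Down)" by (rule card_Un_le)
  also have "card (Up \<union> Down) \<le> 2^k"
  proof -
    from stuck consider "c (4*k) = 0 \<or> (\<exists>i<k. c i = 0 \<and> c (k+i) = 0)"
      | "c (4*k+1) = 0 \<or> (\<exists>i<k. c (2*k+i) = 0 \<and> c (3*k+i) = 0)"
      using cz by blast
    then show ?thesis
    proof cases
      case 1
      then have "Down = {}" unfolding Down_def by (rule no_down_neighbours)
      then show ?thesis using card_up_neighbours_le[of k c b] cz unfolding Up_def by simp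
    next
      case 2
      then have "Up = {}" unfolding Up_def by (rule no_up_neighbours)
      then show ?thesis using card_down_neighbours_le[of k c b] cz unfolding Down_def by simp
    qed
  qed
  finally show ?thesis using card_wmove_neighbours_le[OF c cz] unfolding W_def by linarith
qed

lemma min_degree_le_gdegree: "finite F \<Longrightarrow> c \<in> F \<Longrightarrow> min_degree F Mv \<le> gdegree F Mv c"
  unfolding min_degree_def by (intro Min_le) auto

lemma card_bounded_Collect_le: "card {i::nat. i < k \<and> P i} \<le> k"
  by (rule order_trans[OF card_mono[of "{..<k}"]]) auto

text \<open>Empty the x- and z-entries into y and w, then shift \<open>m\<close> from \<open>t\<close> to \<open>t'\<close>;
  all row sums stay the same.\<close>
definition corner :: "nat \<Rightarrow> (nat \<Rightarrow> int) \<Rightarrow> int \<Rightarrow> nat \<Rightarrow> int" where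
  "corner k v m = (\<lambda>n. if n < k then 0 else if n < 2*k then v (n-k) + v n - m
      else if n < 3*k then 0 else if n < 4*k then v (n-k) + v n + m
      else if n = 4*k then v (4*k) - m else if n = 4*k+1 then v (4*k+1) + m else 0)"

lemma corner_simps:
  assumes "i < k"
  shows "corner k v m i = 0" "corner k v m (k+i) = v i + v (k+i) - m"
    "corner k v m (2*k+i) = 0" "corner k v m (3*k+i) = v (2*k+i) + v (3*k+i) + m"
  using assms by (auto simp: corner_def)

lemma corner_t: "corner k v m (4*k) = v (4*k) - m" "corner k v m (4*k+1) = v (4*k+1) + m"
  and corner_out: "n \<ge> 4*k+2 \<Longrightarrow> corner k v m n = 0"
  by (auto simp: corner_def)

lemma corner_in_fiber_A:
  assumes v: "v \<in> fiber_A k b"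
    and m: "m \<le> v (4*k)" "- m \<le> v (4*k+1)"
      "\<And>i. i < k \<Longrightarrow> m \<le> v i + v (k+i)" "\<And>i. i < k \<Longrightarrow> - m \<le> v (2*k+i) + v (3*k+i)"
  shows "corner k v m \<in> fiber_A k b"
  unfolding fiber_A_iff
proof (intro conjI allI impI)
  show "corner k v m \<in> zvecs (4*k+2)" by (simp add: zvecs_def corner_out)
  fix n
  show "corner k v m n \<ge> 0"
  proof (cases "n < 4*k+2")
    case True then show ?thesis
    proof (cases rule: Ak_coord_cases[of n k])
      case (y i) then show ?thesis using m(3)[of i] by (simp add: corner_simps)
    next
      case (w i) then show ?thesis using m(4)[of i] by (simp add: corner_simps)
    next
      case t then show ?thesis using m(1) corner_t(1)[of k v m] by simp
    next
      case t' then show ?thesis using m(2) corner_t(2)[of k v m] by simp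
    qed (simp_all add: corner_simps)
  qed (simp add: corner_out)
next
  have vv: "\<And>i. i<k \<Longrightarrow> v i + v (k+i) - v (4*k) = b i \<and> v (2*k+i) + v (3*k+i) - v (4*k+1) = b (k+i)"
      "v (4*k) + v (4*k+1) = b (2*k)"
    using v unfolding fiber_A_iff by auto
  fix i assume "i < k"
  then show "corner k v m i + corner k v m (k+i) - corner k v m (4*k) = b i"
    "corner k v m (2*k+i) + corner k v m (3*k+i) - corner k v m (4*k+1) = b (k+i)"
    using vv(1)[of i] corner_t[of k v m] by (simp_all add: corner_simps)
next
  show "corner k v m (4*k) + corner k v m (4*k+1) = b (2*k)"
    using v corner_t[of k v m] unfolding fiber_A_iff by simp
qed

lemma min_degree_A_le_xy:
  assumes v: "v \<in> fiber_A k b"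
  shows "min_degree (fiber_A k b) (graver_A k) \<le> card {i. i<k \<and> v i + v (k+i) > 0} + k + 2^k"
proof -
  have nonneg: "\<And>n. v n \<ge> 0" using v unfolding fiber_A_iff by auto
  define S where "S = insert (v (4*k)) ((\<lambda>i. v i + v (k+i)) ` {..<k})"
  define m where "m = Min S"
  have "finite S" "S \<noteq> {}" unfolding S_def by auto
  then have "m \<in> S" unfolding m_def by (rule Min_in)
  then have m_le: "m \<le> v (4*k)" "\<And>i. i<k \<Longrightarrow> m \<le> v i + v (k+i)"
    and m_nonneg: "m \<ge> 0"
    unfolding m_def S_def using nonneg by (auto intro: add_nonneg_nonneg)
  have m_attained: "m = v (4*k) \<or> (\<exists>i<k. m = v i + v (k+i))"
    using \<open>m \<in> S\<close> unfolding S_def by auto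
  let ?c = "corner k v m"
  have "- m \<le> v n" "- m \<le> v n + v n'" for n n' using nonneg[of n] nonneg[of n'] m_nonneg by linarith+
  then have c: "?c \<in> fiber_A k b"
    using m_le by (intro corner_in_fiber_A[OF v]) auto
  have "gdegree (fiber_A k b) (graver_A k) ?c
      \<le> card {i. i<k \<and> ?c (k+i) > 0} + card {i. i<k \<and> ?c (3*k+i) > 0} + 2^k"
    by (rule corner_degree_le[OF c]) (use m_attained corner_t[of k v] in \<open>auto simp: corner_simps\<close>)
  also have "card {i. i<k \<and> ?c (k+i) > 0} \<le> card {i. i<k \<and> v i + v (k+i) > 0}"
    by (rule card_mono) (use m_nonneg in \<open>auto simp: corner_simps\<close>)
  also have "card {i. i<k \<and> ?c (3*k+i) > 0} \<le> k" by (rule card_bounded_Collect_le)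
  finally show ?thesis using min_degree_le_gdegree[OF finite_fiber_A c, of "graver_A k"] by linarith
qed

lemma min_degree_A_le_zw:
  assumes v: "v \<in> fiber_A k b"
  shows "min_degree (fiber_A k b) (graver_A k) \<le> k + card {i. i<k \<and> v (2*k+i) + v (3*k+i) > 0} + 2^k"
proof -
  have nonneg: "\<And>n. v n \<ge> 0" using v unfolding fiber_A_iff by auto
  define S where "S = insert (v (4*k+1)) ((\<lambda>i. v (2*k+i) + v (3*k+i)) ` {..<k})"
  define m where "m = Min S"
  have "finite S" "S \<noteq> {}" unfolding S_def by auto
  then have "m \<in> S" unfolding m_def by (rule Min_in)
  then have m_le: "m \<le> v (4*k+1)" "\<And>i. i<k \<Longrightarrow> m \<le> v (2*k+i) + v (3*k+i)"
    and m_nonneg: "m \<ge> 0"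
    unfolding m_def S_def using nonneg by (auto intro: add_nonneg_nonneg)
  have m_attained: "m = v (4*k+1) \<or> (\<exists>i<k. m = v (2*k+i) + v (3*k+i))"
    using \<open>m \<in> S\<close> unfolding S_def by auto
  let ?c = "corner k v (- m)"
  have "- m \<le> v n" "- m \<le> v n + v n'" for n n' using nonneg[of n] nonneg[of n'] m_nonneg by linarith+
  then have c: "?c \<in> fiber_A k b"
    using m_le by (intro corner_in_fiber_A[OF v]) auto
  have "gdegree (fiber_A k b) (graver_A k) ?c
      \<le> card {i. i<k \<and> ?c (k+i) > 0} + card {i. i<k \<and> ?c (3*k+i) > 0} + 2^k"
    by (rule corner_degree_le[OF c]) (use m_attained corner_t[of k v] in \<open>auto simp: corner_simps\<close>)
  also have "card {i. i<k \<and> ?c (3*k+i) > 0} \<le> card {i. i<k \<and> v (2*k+i) + v (3*k+i) > 0}"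
    by (rule card_mono) (use m_nonneg in \<open>auto simp: corner_simps\<close>)
  also have "card {i. i<k \<and> ?c (k+i) > 0} \<le> k" by (rule card_bounded_Collect_le)
  finally show ?thesis using min_degree_le_gdegree[OF finite_fiber_A c, of "graver_A k"] by linarith
qed

section \<open>Edge-disjoint paths across a u-move\<close>

lemma gpath_iff_successively:
  "gpath F Mv p a c \<longleftrightarrow>
    p \<noteq> [] \<and> hd p = a \<and> last p = c \<and> distinct p \<and> set p \<subseteq> F \<and> successively (fadj F Mv) p"
  unfolding gpath_def successively_conv_nth ..

lemma gpath_intro:
  "p \<noteq> [] \<Longrightarrow> hd p = a \<Longrightarrow> last p = c \<Longrightarrow> distinct (map f p) \<Longrightarrow> set p \<subseteq> F \<Longrightarrow>
    successively (fadj F Mv) p \<Longrightarrow> gpath F Mv p a c"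
  unfolding gpath_iff_successively using distinct_map by blast

lemma gpath_rev: "gpath F Mv p a c \<Longrightarrow> gpath F Mv (rev p) c a"
  unfolding gpath_iff_successively
  by (auto simp: hd_rev last_rev elim: successively_mono intro: fadj_sym)

lemma path_edges_Cons_Cons: "path_edges (x # y # xs) = insert {x, y} (path_edges (y # xs))"
proof (intro set_eqI iffI)
  fix E assume "E \<in> path_edges (x # y # xs)"
  then obtain i where "E = {(x#y#xs) ! i, (x#y#xs) ! Suc i}" "Suc i < length (x#y#xs)"
    unfolding path_edges_def by blast
  then show "E \<in> insert {x, y} (path_edges (y # xs))"
    by (cases i) (auto simp: path_edges_def)
next
  fix E assume "E \<in> insert {x, y} (path_edges (y # xs))"
  then show "E \<in> path_edges (x # y # xs)"
  proof
    assume "E = {x, y}"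
    then show ?thesis unfolding path_edges_def by (intro CollectI exI[of _ 0]) auto
  next
    assume "E \<in> path_edges (y # xs)"
    then obtain i where "E = {(y#xs) ! i, (y#xs) ! Suc i}" "Suc i < length (y#xs)"
      unfolding path_edges_def by blast
    then show ?thesis unfolding path_edges_def by (intro CollectI exI[of _ "Suc i"]) auto
  qed
qed

lemma path_edges_singleton: "path_edges [x] = {}"
  by (simp add: path_edges_def)

lemma path_edges_rev_subset: "path_edges (rev q) \<subseteq> path_edges q"
proof
  fix E assume "E \<in> path_edges (rev q)"
  then obtain i where i: "E = {rev q ! i, rev q ! Suc i}" "Suc i < length (rev q)"
    unfolding path_edges_def by blast
  define m where "m = length q - Suc (Suc i)"
  have "Suc m < length q" "E = {q ! m, q ! Suc m}"
    using i by (auto simp: rev_nth m_def Suc_diff_Suc)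
  then show "E \<in> path_edges q" unfolding path_edges_def by blast
qed

lemma path_edges_rev: "path_edges (rev p) = path_edges p"
  using path_edges_rev_subset[of p] path_edges_rev_subset[of "rev p"] by auto

definition ind :: "nat set \<Rightarrow> nat \<Rightarrow> int" where
  "ind D n = (if n \<in> D then 1 else 0)"

lemma sum_ind: "D \<subseteq> {..<k} \<Longrightarrow> (\<Sum>n<k. ind D n) = int (card D)"
  unfolding ind_def by (simp add: sum.If_cases Int_absorb1)

lemma support_ind: "D \<subseteq> {..<k} \<Longrightarrow> {n. n < k \<and> ind D n \<noteq> 0} = D"
  by (auto simp: ind_def)

definition edge_disjoint_paths ::
    "(nat \<Rightarrow> int) set \<Rightarrow> (nat \<Rightarrow> int) set \<Rightarrow> nat \<Rightarrow> (nat \<Rightarrow> int) \<Rightarrow> (nat \<Rightarrow> int) \<Rightarrow> bool" where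
  "edge_disjoint_paths F Mv d a c \<longleftrightarrow> (\<exists>Ps. length Ps = d \<and> (\<forall>p \<in> set Ps. gpath F Mv p a c) \<and>
     (\<forall>i<length Ps. \<forall>j<length Ps. i \<noteq> j \<longrightarrow> path_edges (Ps ! i) \<inter> path_edges (Ps ! j) = {}))"

lemma edge_disjoint_paths_sym:
  assumes "edge_disjoint_paths F Mv d a c" shows "edge_disjoint_paths F Mv d c a"
proof -
  obtain Ps where "length Ps = d" "\<forall>p \<in> set Ps. gpath F Mv p a c"
    "\<forall>i<length Ps. \<forall>j<length Ps. i \<noteq> j \<longrightarrow> path_edges (Ps ! i) \<inter> path_edges (Ps ! j) = {}"
    using assms unfolding edge_disjoint_paths_def by blast
  then show ?thesis
    unfolding edge_disjoint_paths_def
    by (intro exI[of _ "map rev Ps"]) (auto simp: gpath_rev path_edges_rev)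
qed

datatype route = Direct | Swap "nat set" | Zfirst nat | Xback nat | Zback nat | Cross nat nat

locale cross_edge =
  fixes k :: nat and b :: "nat \<Rightarrow> int" and u u' :: "nat \<Rightarrow> int"
  assumes u_in: "u \<in> fiber_A k b" and u'_in: "u' \<in> fiber_A k b"
    and umove: "is_umove k (\<lambda>n. u' n - u n)"
begin

abbreviation "F \<equiv> fiber_A k b"
abbreviation "G \<equiv> graver_A k"

text \<open>The u-move from \<open>u\<close> to \<open>u'\<close> raises one entry \<open>xmov i\<close> of each x/y pair and lowers
  one entry \<open>zmov i\<close> of each z/w pair; \<open>xfix i\<close> and \<open>zfix i\<close> are the other entries.\<close>
definition x_fixed :: "nat \<Rightarrow> bool" where "x_fixed i \<longleftrightarrow> u' i = u i"
definition z_fixed :: "nat \<Rightarrow> bool" where "z_fixed i \<longleftrightarrow> u' (2*k+i) = u (2*k+i)"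

definition xfix :: "nat \<Rightarrow> nat" where "xfix i = (if x_fixed i then i else k+i)"
definition xmov :: "nat \<Rightarrow> nat" where "xmov i = (if x_fixed i then k+i else i)"
definition zfix :: "nat \<Rightarrow> nat" where "zfix i = (if z_fixed i then 2*k+i else 3*k+i)"
definition zmov :: "nat \<Rightarrow> nat" where "zmov i = (if z_fixed i then 3*k+i else 2*k+i)"

text \<open>The vertex reached from \<open>u\<close> by \<open>t\<close> copies of the u-move, followed by moving \<open>dx i\<close>
  units from \<open>xmov i\<close> to \<open>xfix i\<close> and \<open>dz i\<close> units from \<open>zmov i\<close> to \<open>zfix i\<close>.\<close>
definition vtx :: "int \<Rightarrow> (nat \<Rightarrow> int) \<Rightarrow> (nat \<Rightarrow> int) \<Rightarrow> nat \<Rightarrow> int" where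
  "vtx t dx dz = (\<lambda>n. if n < k then u n + (if x_fixed n then dx n else t - dx n)
     else if n < 2*k then u n + (if x_fixed (n-k) then t - dx (n-k) else dx (n-k))
     else if n < 3*k then u n + (if z_fixed (n-2*k) then dz (n-2*k) else - t - dz (n-2*k))
     else if n < 4*k then u n + (if z_fixed (n-3*k) then - t - dz (n-3*k) else dz (n-3*k))
     else if n = 4*k then u n + t else if n = 4*k+1 then u n - t else u n)"

lemma vtx_x: "i < k \<Longrightarrow> vtx t dx dz i = u i + (if x_fixed i then dx i else t - dx i)"
  and vtx_y: "i < k \<Longrightarrow> vtx t dx dz (k+i) = u (k+i) + (if x_fixed i then t - dx i else dx i)"
  and vtx_z: "i < k \<Longrightarrow> vtx t dx dz (2*k+i) = u (2*k+i) + (if z_fixed i then dz i else - t - dz i)"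
  and vtx_w: "i < k \<Longrightarrow> vtx t dx dz (3*k+i) = u (3*k+i) + (if z_fixed i then - t - dz i else dz i)"
  and vtx_t: "vtx t dx dz (4*k) = u (4*k) + t" "vtx t dx dz (4*k+1) = u (4*k+1) - t"
    "vtx t dx dz (Suc (4*k)) = u (Suc (4*k)) - t"
  and vtx_out: "n \<ge> 4*k+2 \<Longrightarrow> vtx t dx dz n = u n"
  by (auto simp: vtx_def)

lemmas vtx_simps = vtx_x vtx_y vtx_z vtx_w vtx_t

lemma vtx_xfix: "i < k \<Longrightarrow> vtx t dx dz (xfix i) = u (xfix i) + dx i"
  and vtx_zfix: "i < k \<Longrightarrow> vtx t dx dz (zfix i) = u (zfix i) + dz i"
  by (auto simp: xfix_def zfix_def vtx_simps)

lemma u_nonneg: "u n \<ge> 0" and u'_nonneg: "u' n \<ge> 0"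
  and u_zvecs: "u \<in> zvecs (4*k+2)" and u'_zvecs: "u' \<in> zvecs (4*k+2)"
  using u_in u'_in unfolding fiber_A_iff by auto

lemma umove_pair: "i < k \<Longrightarrow>
    (u' i - u i = 1 \<and> u' (k+i) - u (k+i) = 0 \<or> u' i - u i = 0 \<and> u' (k+i) - u (k+i) = 1) \<and>
    (u' (2*k+i) - u (2*k+i) = -1 \<and> u' (3*k+i) - u (3*k+i) = 0 \<or>
     u' (2*k+i) - u (2*k+i) = 0 \<and> u' (3*k+i) - u (3*k+i) = -1)"
  using umove_diff_pair[OF umove] .

lemma u_zmov_pos: "i < k \<Longrightarrow> u (zmov i) \<ge> 1"
  using umove_pair u'_nonneg[of "2*k+i"] u'_nonneg[of "3*k+i"]
  by (fastforce simp: zmov_def z_fixed_def)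

lemma u_t'_pos: "u (4*k+1) \<ge> 1"
  using umove_diff_t(2)[OF umove] u'_nonneg[of "4*k+1"] by simp

lemma vtx_0: "vtx 0 (\<lambda>_. 0) (\<lambda>_. 0) = u"
  by (rule Ak_vec_eqI[where k=k]) (auto simp: vtx_simps vtx_out)

lemma vtx_1: "vtx 1 (\<lambda>_. 0) (\<lambda>_. 0) = u'"
proof (rule Ak_vec_eqI[where k=k])
  fix i assume i: "i < k"
  show "vtx 1 (\<lambda>_. 0) (\<lambda>_. 0) i = u' i \<and> vtx 1 (\<lambda>_. 0) (\<lambda>_. 0) (k+i) = u' (k+i) \<and>
      vtx 1 (\<lambda>_. 0) (\<lambda>_. 0) (2*k+i) = u' (2*k+i) \<and> vtx 1 (\<lambda>_. 0) (\<lambda>_. 0) (3*k+i) = u' (3*k+i)"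
    using umove_pair[OF i] i by (auto simp: vtx_simps x_fixed_def z_fixed_def)
next
  fix n :: nat assume "n \<ge> 4*k+2"
  then show "vtx 1 (\<lambda>_. 0) (\<lambda>_. 0) n = u' n"
    using zvecs_eq_outside[OF u_zvecs u'_zvecs] by (simp add: vtx_out)
qed (use umove_diff_t[OF umove] in \<open>simp_all add: vtx_simps\<close>)

text \<open>The bounds on \<open>u\<close> offered in the premises always hold (\<open>u_nonneg\<close>, \<open>u_zmov_pos\<close>,
  \<open>u_t'_pos\<close>); having them as premises leaves callers with pure arithmetic.\<close>
lemma vtx_in_fiber:
  assumes "\<And>i. i < k \<Longrightarrow> u (xfix i) \<ge> 0 \<Longrightarrow> u (xmov i) \<ge> 0 \<Longrightarrow> u (zfix i) \<ge> 0 \<Longrightarrow> u (zmov i) \<ge> 1 \<Longrightarrow>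
      u (xfix i) + dx i \<ge> 0 \<and> u (xmov i) + t - dx i \<ge> 0 \<and> u (zfix i) + dz i \<ge> 0 \<and> u (zmov i) - t - dz i \<ge> 0"
    and "u (4*k) \<ge> 0 \<Longrightarrow> u (4*k) + t \<ge> 0" "u (4*k+1) \<ge> 1 \<Longrightarrow> u (4*k+1) - t \<ge> 0"
  shows "vtx t dx dz \<in> F"
proof -
  have u: "\<And>i. i<k \<Longrightarrow> u i + u (k+i) - u (4*k) = b i \<and> u (2*k+i) + u (3*k+i) - u (4*k+1) = b (k+i)"
      "u (4*k) + u (4*k+1) = b (2*k)"
    using u_in unfolding fiber_A_iff by auto
  have bounds: "u (xfix i) + dx i \<ge> 0" "u (xmov i) + t - dx i \<ge> 0"
      "u (zfix i) + dz i \<ge> 0" "u (zmov i) - t - dz i \<ge> 0" if "i < k" for i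
    using assms(1)[OF that u_nonneg u_nonneg u_nonneg u_zmov_pos[OF that]] by auto
  show ?thesis unfolding fiber_A_iff
  proof (intro conjI allI impI)
    show "vtx t dx dz \<in> zvecs (4*k+2)"
      using u_zvecs by (simp add: zvecs_def vtx_out)
    fix n show "0 \<le> vtx t dx dz n"
    proof (cases "n < 4*k+2")
      case True then show ?thesis
      proof (cases rule: Ak_coord_cases[of n k])
        case (x i) then show ?thesis
          using bounds[OF x(1)] by (cases "x_fixed i") (auto simp: vtx_x xfix_def xmov_def)
      next
        case (y i) then show ?thesis
          using bounds[OF y(1)] by (cases "x_fixed i") (auto simp: vtx_y xfix_def xmov_def)
      next
        case (z i) then show ?thesis
          using bounds[OF z(1)] by (cases "z_fixed i") (auto simp: vtx_z zfix_def zmov_def)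
      next
        case (w i) then show ?thesis
          using bounds[OF w(1)] by (cases "z_fixed i") (auto simp: vtx_w zfix_def zmov_def)
      qed (use assms(2,3) u_nonneg u_t'_pos in \<open>simp_all add: vtx_t\<close>)
    qed (use u_nonneg in \<open>simp add: vtx_out\<close>)
  next
    fix i assume i: "i < k"
    show "vtx t dx dz i + vtx t dx dz (k+i) - vtx t dx dz (4*k) = b i"
      "vtx t dx dz (2*k+i) + vtx t dx dz (3*k+i) - vtx t dx dz (4*k+1) = b (k+i)"
      using u(1)[OF i] i by (auto simp: vtx_simps)
  next
    show "vtx t dx dz (4*k) + vtx t dx dz (4*k+1) = b (2*k)" using u(2) by (simp add: vtx_simps)
  qed
qed

lemma fadj_vtx_x_step:
  assumes A: "vtx t dx dz \<in> F" and B: "vtx t dx' dz \<in> F"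
    and j: "j < k" and "dx' j = dx j + 1" and "\<And>i. i < k \<Longrightarrow> i \<noteq> j \<Longrightarrow> dx' i = dx i"
  shows "fadj F G (vtx t dx dz) (vtx t dx' dz)"
proof -
  let ?h = "\<lambda>n. vtx t dx' dz n - vtx t dx dz n"
  have h: "?h = (if x_fixed j then wmove k j else (\<lambda>n. - wmove k j n))"
    by (rule Ak_vec_eqI[where k=k]) (use assms in \<open>auto simp: vtx_simps vtx_out wmove_def\<close>)
  then have "is_wmove k ?h" unfolding is_wmove_def using j by (cases "x_fixed j") auto
  moreover have "?h j \<noteq> 0" using fun_cong[OF h, of j] by (simp add: wmove_def)
  ultimately show ?thesis unfolding fadj_def using A B is_wmove_in_graver_A by fastforce
qed

lemma fadj_vtx_z_step:
  assumes A: "vtx t dx dz \<in> F" and B: "vtx t dx dz' \<in> F"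
    and j: "j < k" and "dz' j = dz j + 1" and "\<And>i. i < k \<Longrightarrow> i \<noteq> j \<Longrightarrow> dz' i = dz i"
  shows "fadj F G (vtx t dx dz) (vtx t dx dz')"
proof -
  let ?h = "\<lambda>n. vtx t dx dz' n - vtx t dx dz n"
  have h: "?h = (if z_fixed j then wmove k (2*k+j) else (\<lambda>n. - wmove k (2*k+j) n))"
    by (rule Ak_vec_eqI[where k=k]) (use assms in \<open>auto simp: vtx_simps vtx_out wmove_def\<close>)
  then have "is_wmove k ?h" unfolding is_wmove_def using j by (intro exI[of _ "2*k+j"]) auto
  moreover have "?h (2*k+j) \<noteq> 0" using fun_cong[OF h, of "2*k+j"] by (simp add: wmove_def)
  ultimately show ?thesis unfolding fadj_def using A B is_wmove_in_graver_A by fastforce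
qed

lemma fadj_vtx_u_step:
  assumes A: "vtx t dx dz \<in> F" and B: "vtx (t+1) dx' dz' \<in> F"
    and d: "\<And>i. i < k \<Longrightarrow> (dx' i = dx i \<or> dx' i = dx i + 1) \<and> (dz' i = dz i \<or> dz' i = dz i - 1)"
  shows "fadj F G (vtx t dx dz) (vtx (t+1) dx' dz')"
proof -
  let ?h = "\<lambda>n. vtx (t+1) dx' dz' n - vtx t dx dz n"
  have "is_umove k ?h" unfolding is_umove_def
  proof (intro conjI allI impI)
    show "?h \<in> zvecs (4*k+2)" by (simp add: zvecs_def vtx_out)
    show "?h (4*k) = 1" "?h (4*k+1) = -1" by (simp_all add: vtx_t)
  next
    fix i assume i: "i < k"
    show "?h i = 1 \<and> ?h (k+i) = 0 \<or> ?h i = 0 \<and> ?h (k+i) = 1"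
      "?h (2*k+i) = -1 \<and> ?h (3*k+i) = 0 \<or> ?h (2*k+i) = 0 \<and> ?h (3*k+i) = -1"
      using d[OF i] i by (auto simp: vtx_simps)
  qed
  moreover have "?h (4*k) \<noteq> 0" by (simp add: vtx_t)
  ultimately show ?thesis unfolding fadj_def using A B umove_in_graver_A by fastforce
qed

definition signature :: "(nat \<Rightarrow> int) \<Rightarrow> int \<times> int \<times> int \<times> nat set \<times> nat set" where
  "signature v = (v (4*k) - u (4*k), \<Sum>i<k. v (xfix i) - u (xfix i), \<Sum>i<k. v (zfix i) - u (zfix i),
     {i. i < k \<and> v (xfix i) \<noteq> u (xfix i)}, {i. i < k \<and> v (zfix i) \<noteq> u (zfix i)})"

lemma signature_vtx:
  "signature (vtx t dx dz) = (t, \<Sum>i<k. dx i, \<Sum>i<k. dz i, {i. i < k \<and> dx i \<noteq> 0}, {i. i < k \<and> dz i \<noteq> 0})"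
proof -
  have "(\<Sum>i<k. vtx t dx dz (xfix i) - u (xfix i)) = (\<Sum>i<k. dx i)"
    "(\<Sum>i<k. vtx t dx dz (zfix i) - u (zfix i)) = (\<Sum>i<k. dz i)"
    by (auto intro: sum.cong simp: vtx_xfix vtx_zfix)
  moreover have "{i. i < k \<and> vtx t dx dz (xfix i) \<noteq> u (xfix i)} = {i. i < k \<and> dx i \<noteq> 0}"
    "{i. i < k \<and> vtx t dx dz (zfix i) \<noteq> u (zfix i)} = {i. i < k \<and> dz i \<noteq> 0}"
    by (auto simp: vtx_xfix vtx_zfix)
  ultimately show ?thesis unfolding signature_def by (simp add: vtx_t)
qed

lemma signature_u: "signature u = (0, 0, 0, {}, {})"
  and signature_u': "signature u' = (1, 0, 0, {}, {})"
  using signature_vtx[of 0 "\<lambda>_. 0" "\<lambda>_. 0"] signature_vtx[of 1 "\<lambda>_. 0" "\<lambda>_. 0"]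
  unfolding vtx_0 vtx_1 by simp_all

lemmas signature_simps = signature_vtx signature_u signature_u' sum_ind support_ind sum_negf

lemma fadj_u_step_from_u:
  assumes "vtx 1 dx dz \<in> F" "\<And>i. i < k \<Longrightarrow> (dx i = 0 \<or> dx i = 1) \<and> (dz i = 0 \<or> dz i = -1)"
  shows "fadj F G u (vtx 1 dx dz)"
  using fadj_vtx_u_step[of 0 "\<lambda>_. 0" "\<lambda>_. 0" dx dz] assms u_in by (simp add: vtx_0)

lemma fadj_u_step_to_u':
  assumes "vtx 0 dx dz \<in> F" "\<And>i. i < k \<Longrightarrow> (dx i = 0 \<or> dx i = -1) \<and> (dz i = 0 \<or> dz i = 1)"
  shows "fadj F G (vtx 0 dx dz) u'"
  using fadj_vtx_u_step[of 0 dx dz "\<lambda>_. 0" "\<lambda>_. 0"] assms u'_in by (fastforce simp: vtx_1)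

definition xback_idx :: "nat set" where "xback_idx = {i. i < k \<and> u (xfix i) > 0}"
definition zback_idx :: "nat set" where "zback_idx = {i. i < k \<and> u (zfix i) > 0}"
definition xcross_idx :: "nat set" where "xcross_idx = {i. i < k \<and> u (xmov i) > 0}"
definition zcross_idx :: "nat set" where "zcross_idx = {i. i < k \<and> u (zmov i) > 1}"

definition cross_pairs :: "(nat \<times> nat) set" where
  "cross_pairs = set (zip (sorted_list_of_set xcross_idx) (sorted_list_of_set zcross_idx))"

definition routes :: "route set" where
  "routes = {Direct} \<union> Swap ` {D. D \<subseteq> {..<k} \<and> D \<noteq> {}} \<union> Zfirst ` {..<k}
     \<union> Xback ` xback_idx \<union> Zback ` zback_idx \<union> case_prod Cross ` cross_pairs"

text \<open>For \<open>D = {j}\<close> the four-vertex \<open>Swap\<close> route would share its last edge with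
  \<open>Zfirst j\<close>, so it ends with an x-step instead.\<close>
definition route_path :: "route \<Rightarrow> (nat \<Rightarrow> int) list" where
  "route_path r = (case r of
      Direct \<Rightarrow> [u, u']
    | Swap D \<Rightarrow> (if card D = 1 then [u, vtx 1 (ind D) (\<lambda>_. 0), u']
               else [u, vtx 1 (ind D) (\<lambda>_. 0), vtx 0 (\<lambda>_. 0) (ind D), u'])
    | Zfirst i \<Rightarrow> [u, vtx 0 (\<lambda>_. 0) (ind {i}), u']
    | Xback i \<Rightarrow> [u, vtx 0 (\<lambda>n. - ind {i} n) (\<lambda>_. 0), vtx 1 (\<lambda>n. - ind {i} n) (\<lambda>_. 0), u']
    | Zback i \<Rightarrow> [u, vtx 0 (\<lambda>_. 0) (\<lambda>n. - ind {i} n), vtx 1 (\<lambda>_. 0) (\<lambda>n. - ind {i} n), u']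
    | Cross i j \<Rightarrow> [u, vtx 0 (ind {i}) (\<lambda>_. 0), vtx 1 (ind {i}) (\<lambda>_. 0), vtx 1 (ind {i}) (ind {j}),
                    vtx 1 (\<lambda>_. 0) (ind {j}), u'])"

lemma cross_pairs_mem: "(i, j) \<in> cross_pairs \<Longrightarrow> i \<in> xcross_idx \<and> j \<in> zcross_idx"
  unfolding cross_pairs_def xcross_idx_def zcross_idx_def by (auto dest: set_zip_leftD set_zip_rightD)

lemma gpath_Direct: "gpath F G (route_path Direct) u u'"
proof (rule gpath_intro[where f=signature])
  show "successively (fadj F G) (route_path Direct)"
    using fadj_u_step_from_u[of "\<lambda>_. 0" "\<lambda>_. 0"] u'_in by (simp add: route_path_def vtx_1)
qed (use u_in u'_in in \<open>simp_all add: route_path_def signature_simps\<close>)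

lemma gpath_Swap:
  assumes D: "D \<subseteq> {..<k}" "D \<noteq> {}"
  shows "gpath F G (route_path (Swap D)) u u'"
proof -
  have "card D \<ge> 1" using D finite_subset[OF D(1)] by (simp add: Suc_le_eq card_gt_0_iff)
  have a: "vtx 1 (ind D) (\<lambda>_. 0) \<in> F" by (rule vtx_in_fiber) (auto simp: ind_def)
  have b: "vtx 0 (\<lambda>_. 0) (ind D) \<in> F" by (rule vtx_in_fiber) (auto simp: ind_def)
  have e1: "fadj F G u (vtx 1 (ind D) (\<lambda>_. 0))"
    by (rule fadj_u_step_from_u[OF a]) (simp add: ind_def)
  have e2: "fadj F G (vtx 1 (ind D) (\<lambda>_. 0)) (vtx 0 (\<lambda>_. 0) (ind D))"
    using fadj_vtx_u_step[OF b, of "ind D" "\<lambda>_. 0"] a by (auto simp: ind_def intro: fadj_sym)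
  have e3: "fadj F G (vtx 0 (\<lambda>_. 0) (ind D)) u'"
    by (rule fadj_u_step_to_u'[OF b]) (simp add: ind_def)
  show ?thesis
  proof (cases "card D = 1")
    case True
    then obtain j where j: "D = {j}" by (auto simp: card_Suc_eq)
    have "fadj F G (vtx 1 (ind D) (\<lambda>_. 0)) u'"
      using fadj_vtx_x_step[of 1 "\<lambda>_. 0" "\<lambda>_. 0" "ind D" j] u'_in a D
      by (auto simp: vtx_1 j ind_def intro: fadj_sym)
    then show ?thesis
      by (intro gpath_intro[where f=signature])
         (use True a e1 D u_in u'_in in \<open>simp_all add: route_path_def signature_simps\<close>)
  next
    case False
    then show ?thesis
      by (intro gpath_intro[where f=signature])
         (use \<open>card D \<ge> 1\<close> a b e1 e2 e3 D u_in u'_in in \<open>simp_all add: route_path_def signature_simps\<close>)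
  qed
qed

lemma gpath_Zfirst:
  assumes i: "i < k"
  shows "gpath F G (route_path (Zfirst i)) u u'"
proof -
  have a: "vtx 0 (\<lambda>_. 0) (ind {i}) \<in> F" by (rule vtx_in_fiber) (auto simp: ind_def)
  have "fadj F G u (vtx 0 (\<lambda>_. 0) (ind {i}))"
    using fadj_vtx_z_step[of 0 "\<lambda>_. 0" "\<lambda>_. 0" "ind {i}" i] a u_in i by (simp add: vtx_0 ind_def)
  moreover have "fadj F G (vtx 0 (\<lambda>_. 0) (ind {i})) u'"
    by (rule fadj_u_step_to_u'[OF a]) (simp add: ind_def)
  ultimately show ?thesis
    by (intro gpath_intro[where f=signature])
       (use a i u_in u'_in in \<open>simp_all add: route_path_def signature_simps\<close>)
qed

lemma gpath_Xback:
  assumes i: "i \<in> xback_idx"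
  shows "gpath F G (route_path (Xback i)) u u'"
proof -
  have ik: "i < k" "u (xfix i) > 0" using i unfolding xback_idx_def by auto
  let ?d = "\<lambda>n. - ind {i} n"
  have a: "vtx 0 ?d (\<lambda>_. 0) \<in> F" by (rule vtx_in_fiber) (use ik in \<open>auto simp: ind_def\<close>)
  have b: "vtx 1 ?d (\<lambda>_. 0) \<in> F" by (rule vtx_in_fiber) (use ik in \<open>auto simp: ind_def\<close>)
  have "fadj F G u (vtx 0 ?d (\<lambda>_. 0))"
    using fadj_vtx_x_step[OF a _ ik(1), of "\<lambda>_. 0"] u_in by (auto simp: vtx_0 ind_def intro: fadj_sym)
  moreover have "fadj F G (vtx 0 ?d (\<lambda>_. 0)) (vtx 1 ?d (\<lambda>_. 0))"
    using fadj_vtx_u_step[OF a, of ?d "\<lambda>_. 0"] b by simp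
  moreover have "fadj F G (vtx 1 ?d (\<lambda>_. 0)) u'"
    using fadj_vtx_x_step[OF b _ ik(1), of "\<lambda>_. 0"] u'_in by (auto simp: vtx_1 ind_def)
  ultimately show ?thesis
    by (intro gpath_intro[where f=signature])
       (use a b ik u_in u'_in in \<open>simp_all add: route_path_def signature_simps\<close>)
qed

lemma gpath_Zback:
  assumes i: "i \<in> zback_idx"
  shows "gpath F G (route_path (Zback i)) u u'"
proof -
  have ik: "i < k" "u (zfix i) > 0" using i unfolding zback_idx_def by auto
  let ?d = "\<lambda>n. - ind {i} n"
  have a: "vtx 0 (\<lambda>_. 0) ?d \<in> F" by (rule vtx_in_fiber) (use ik in \<open>auto simp: ind_def\<close>)
  have b: "vtx 1 (\<lambda>_. 0) ?d \<in> F" by (rule vtx_in_fiber) (use ik in \<open>auto simp: ind_def\<close>)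
  have "fadj F G u (vtx 0 (\<lambda>_. 0) ?d)"
    using fadj_vtx_z_step[OF a _ ik(1), of "\<lambda>_. 0"] u_in by (auto simp: vtx_0 ind_def intro: fadj_sym)
  moreover have "fadj F G (vtx 0 (\<lambda>_. 0) ?d) (vtx 1 (\<lambda>_. 0) ?d)"
    using fadj_vtx_u_step[OF a, of "\<lambda>_. 0" ?d] b by simp
  moreover have "fadj F G (vtx 1 (\<lambda>_. 0) ?d) u'"
    using fadj_vtx_z_step[OF b _ ik(1), of "\<lambda>_. 0"] u'_in by (auto simp: vtx_1 ind_def)
  ultimately show ?thesis
    by (intro gpath_intro[where f=signature])
       (use a b ik u_in u'_in in \<open>simp_all add: route_path_def signature_simps\<close>)
qed

lemma gpath_Cross:
  assumes ij: "(i, j) \<in> cross_pairs"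
  shows "gpath F G (route_path (Cross i j)) u u'"
proof -
  have ik: "i < k" "u (xmov i) > 0" "j < k" "u (zmov j) > 1"
    using cross_pairs_mem[OF ij] unfolding xcross_idx_def zcross_idx_def by auto
  have a: "vtx 0 (ind {i}) (\<lambda>_. 0) \<in> F" by (rule vtx_in_fiber) (use ik in \<open>auto simp: ind_def\<close>)
  have b: "vtx 1 (ind {i}) (\<lambda>_. 0) \<in> F" by (rule vtx_in_fiber) (use ik in \<open>auto simp: ind_def\<close>)
  have c: "vtx 1 (ind {i}) (ind {j}) \<in> F" by (rule vtx_in_fiber) (use ik in \<open>auto simp: ind_def\<close>)
  have d: "vtx 1 (\<lambda>_. 0) (ind {j}) \<in> F" by (rule vtx_in_fiber) (use ik in \<open>auto simp: ind_def\<close>)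
  have "fadj F G u (vtx 0 (ind {i}) (\<lambda>_. 0))"
    using fadj_vtx_x_step[OF _ a ik(1), of "\<lambda>_. 0"] u_in by (auto simp: vtx_0 ind_def)
  moreover have "fadj F G (vtx 0 (ind {i}) (\<lambda>_. 0)) (vtx 1 (ind {i}) (\<lambda>_. 0))"
    using fadj_vtx_u_step[OF a, of "ind {i}" "\<lambda>_. 0"] b by simp
  moreover have "fadj F G (vtx 1 (ind {i}) (\<lambda>_. 0)) (vtx 1 (ind {i}) (ind {j}))"
    using fadj_vtx_z_step[OF b c ik(3)] by (auto simp: ind_def)
  moreover have "fadj F G (vtx 1 (ind {i}) (ind {j})) (vtx 1 (\<lambda>_. 0) (ind {j}))"
    using fadj_vtx_x_step[OF d c ik(1)] by (auto simp: ind_def intro: fadj_sym)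
  moreover have "fadj F G (vtx 1 (\<lambda>_. 0) (ind {j})) u'"
    using fadj_vtx_z_step[OF _ d ik(3), of "\<lambda>_. 0"] u'_in by (auto simp: vtx_1 ind_def intro: fadj_sym)
  ultimately show ?thesis
    by (intro gpath_intro[where f=signature])
       (use a b c d ik u_in u'_in in \<open>simp_all add: route_path_def signature_simps\<close>)
qed

lemma gpath_routes: "r \<in> routes \<Longrightarrow> gpath F G (route_path r) u u'"
  unfolding routes_def
  using gpath_Direct gpath_Swap gpath_Zfirst gpath_Xback gpath_Zback gpath_Cross by auto

definition edge_signatures :: "route \<Rightarrow> (int \<times> int \<times> int \<times> nat set \<times> nat set) set set" where
  "edge_signatures r = (\<lambda>E. signature ` E) ` path_edges (route_path r)"

abbreviation "sig_u \<equiv> (0::int, 0::int, 0::int, {}::nat set, {}::nat set)"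
abbreviation "sig_u' \<equiv> (1::int, 0::int, 0::int, {}::nat set, {}::nat set)"

lemmas edge_signatures_simps =
  edge_signatures_def route_path_def path_edges_Cons_Cons path_edges_singleton signature_simps

lemma edge_signatures_Direct: "edge_signatures Direct = {{sig_u, sig_u'}}"
  by (simp add: edge_signatures_simps)

lemma edge_signatures_Swap: "D \<subseteq> {..<k} \<Longrightarrow> edge_signatures (Swap D) =
    {{sig_u, (1, int (card D), 0, D, {})}} \<union>
    (if card D = 1 then {{(1, 1, 0, D, {}), sig_u'}}
     else {{(1, int (card D), 0, D, {}), (0, 0, int (card D), {}, D)}, {(0, 0, int (card D), {}, D), sig_u'}})"
  by (cases "card D = 1") (auto simp: edge_signatures_simps)

lemma edge_signatures_Zfirst: "i < k \<Longrightarrow>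
    edge_signatures (Zfirst i) = {{sig_u, (0, 0, 1, {}, {i})}, {(0, 0, 1, {}, {i}), sig_u'}}"
  by (simp add: edge_signatures_simps)

lemma edge_signatures_Xback: "i < k \<Longrightarrow> edge_signatures (Xback i) =
    {{sig_u, (0, -1, 0, {i}, {})}, {(0, -1, 0, {i}, {}), (1, -1, 0, {i}, {})}, {(1, -1, 0, {i}, {}), sig_u'}}"
  by (simp add: edge_signatures_simps)

lemma edge_signatures_Zback: "i < k \<Longrightarrow> edge_signatures (Zback i) =
    {{sig_u, (0, 0, -1, {}, {i})}, {(0, 0, -1, {}, {i}), (1, 0, -1, {}, {i})}, {(1, 0, -1, {}, {i}), sig_u'}}"
  by (simp add: edge_signatures_simps)

lemma edge_signatures_Cross: "i < k \<Longrightarrow> j < k \<Longrightarrow> edge_signatures (Cross i j) =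
    {{sig_u, (0, 1, 0, {i}, {})}, {(0, 1, 0, {i}, {}), (1, 1, 0, {i}, {})},
     {(1, 1, 0, {i}, {}), (1, 1, 1, {i}, {j})}, {(1, 1, 1, {i}, {j}), (1, 0, 1, {}, {j})},
     {(1, 0, 1, {}, {j}), sig_u'}}"
  by (simp add: edge_signatures_simps)

lemma cross_pairs_inj:
  assumes "(i, j) \<in> cross_pairs" "(i', j') \<in> cross_pairs"
  shows "i = i' \<longleftrightarrow> j = j'"
proof -
  let ?xs = "sorted_list_of_set xcross_idx" and ?ys = "sorted_list_of_set zcross_idx"
  obtain n where n: "n < length ?xs" "n < length ?ys" "?xs ! n = i" "?ys ! n = j"
    using assms(1) unfolding cross_pairs_def set_zip by auto
  obtain n' where n': "n' < length ?xs" "n' < length ?ys" "?xs ! n' = i'" "?ys ! n' = j'"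
    using assms(2) unfolding cross_pairs_def set_zip by auto
  have "i = i' \<longleftrightarrow> n = n'" "j = j' \<longleftrightarrow> n = n'"
    using n n' nth_eq_iff_index_eq[of ?xs] nth_eq_iff_index_eq[of ?ys] by auto
  then show ?thesis by simp
qed

lemma routes_cases:
  assumes "r \<in> routes"
  obtains "r = Direct" | D where "r = Swap D" "D \<subseteq> {..<k}" "D \<noteq> {}" | i where "r = Zfirst i" "i < k"
    | i where "r = Xback i" "i < k" | i where "r = Zback i" "i < k"
    | i j where "r = Cross i j" "(i, j) \<in> cross_pairs" "i < k" "j < k"
  using assms cross_pairs_mem unfolding routes_def xback_idx_def zback_idx_def xcross_idx_def zcross_idx_def
  by fastforce

lemma edge_signatures_disjoint:
  assumes r: "r \<in> routes" and q: "q \<in> routes" and "r \<noteq> q"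
  shows "edge_signatures r \<inter> edge_signatures q = {}"
proof -
  have "card D \<ge> 1" if "D \<subseteq> {..<k}" "D \<noteq> {}" for D
    using that finite_subset by (metis card_0_eq finite_lessThan less_one not_le)
  then show ?thesis
    using r q \<open>r \<noteq> q\<close>
  proof (cases rule: routes_cases[OF r]; cases rule: routes_cases[OF q])
  qed (auto simp: edge_signatures_Direct edge_signatures_Swap edge_signatures_Zfirst edge_signatures_Xback
      edge_signatures_Zback edge_signatures_Cross doubleton_eq_iff dest: cross_pairs_inj split: if_splits)
qed

lemma path_edges_disjoint:
  assumes "r \<in> routes" "q \<in> routes" "r \<noteq> q"
  shows "path_edges (route_path r) \<inter> path_edges (route_path q) = {}"
  using edge_signatures_disjoint[OF assms] unfolding edge_signatures_def by blast

lemma card_cross_pairs: "card cross_pairs = min (card xcross_idx) (card zcross_idx)"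
proof -
  let ?xs = "sorted_list_of_set xcross_idx" and ?ys = "sorted_list_of_set zcross_idx"
  have "distinct (zip ?xs ?ys)" by (rule distinct_zipI1) simp
  then have "card cross_pairs = length (zip ?xs ?ys)" unfolding cross_pairs_def by (rule distinct_card)
  then show ?thesis by (simp add: xcross_idx_def zcross_idx_def)
qed

lemma finite_routes: "finite routes"
  unfolding routes_def cross_pairs_def xback_idx_def zback_idx_def by auto

lemma card_routes:
  "card routes = 2^k + k + card xback_idx + card zback_idx + min (card xcross_idx) (card zcross_idx)"
proof -
  let ?S = "{D. D \<subseteq> {..<k} \<and> D \<noteq> {}}"
  have "?S = Pow {..<k} - {{}}" by auto
  then have card_S: "card ?S = 2^k - 1" by (simp add: card_Pow)
  have fin: "finite ?S" "finite xback_idx" "finite zback_idx" "finite cross_pairs"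
    unfolding xback_idx_def zback_idx_def cross_pairs_def by auto
  let ?R1 = "{Direct} \<union> Swap ` ?S" let ?R2 = "?R1 \<union> Zfirst ` {..<k}"
  let ?R3 = "?R2 \<union> Xback ` xback_idx" let ?R4 = "?R3 \<union> Zback ` zback_idx"
  have "card routes = card ?R4 + card (case_prod Cross ` cross_pairs)"
    unfolding routes_def by (rule card_Un_disjoint) (use fin in auto)
  also have "card ?R4 = card ?R3 + card (Zback ` zback_idx)"
    by (rule card_Un_disjoint) (use fin in auto)
  also have "card ?R3 = card ?R2 + card (Xback ` xback_idx)"
    by (rule card_Un_disjoint) (use fin in auto)
  also have "card ?R2 = card ?R1 + card (Zfirst ` {..<k})"
    by (rule card_Un_disjoint) (use fin in auto)
  also have "card ?R1 = 1 + card (Swap ` ?S)"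
    by (subst card_Un_disjoint) (use fin in auto)
  also have "1 + card (Swap ` ?S) + card (Zfirst ` {..<k}) + card (Xback ` xback_idx)
      + card (Zback ` zback_idx) + card (case_prod Cross ` cross_pairs)
      = 1 + (2^k - 1) + k + card xback_idx + card zback_idx + card cross_pairs"
    using card_S by (simp add: card_image inj_on_def split_beta prod_eq_iff)
  finally show ?thesis by (simp add: card_cross_pairs)
qed

text \<open>The x/y bound is taken at \<open>u\<close> and the z/w bound at \<open>u'\<close>, matching how the routes are counted.\<close>
lemma min_degree_le_card_routes: "min_degree F G \<le> card routes"
proof -
  have xy: "card {i. i<k \<and> u i + u (k+i) > 0} \<le> card xback_idx + card xcross_idx"
  proof -
    have "{i. i<k \<and> u i + u (k+i) > 0} \<subseteq> xback_idx \<union> xcross_idx"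
      using u_nonneg unfolding xback_idx_def xcross_idx_def xfix_def xmov_def
      by (auto split: if_splits)
    then show ?thesis
      by (intro order_trans[OF card_mono card_Un_le]) (simp_all add: xback_idx_def xcross_idx_def)
  qed
  have zw: "card {i. i<k \<and> u' (2*k+i) + u' (3*k+i) > 0} \<le> card zback_idx + card zcross_idx"
  proof -
    have "i \<in> zback_idx \<union> zcross_idx" if "i < k" "u' (2*k+i) + u' (3*k+i) > 0" for i
      using that umove_pair[OF that(1)] u_nonneg[of "2*k+i"] u_nonneg[of "3*k+i"]
      unfolding zback_idx_def zcross_idx_def zfix_def zmov_def z_fixed_def by auto
    then show ?thesis
      by (intro order_trans[OF card_mono card_Un_le]) (auto simp: zback_idx_def zcross_idx_def)
  qed
  show ?thesis
    using min_degree_A_le_xy[OF u_in] min_degree_A_le_zw[OF u'_in] xy zw card_routes by linarith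
qed

theorem edge_disjoint_paths_cross_edge: "edge_disjoint_paths F G (min_degree F G) u u'"
proof -
  obtain rs where rs: "distinct rs" "set rs = routes" using finite_distinct_list[OF finite_routes] by blast
  define Rs where "Rs = take (min_degree F G) rs"
  have Rs: "distinct Rs" "set Rs \<subseteq> routes" "length Rs = min_degree F G"
    using rs min_degree_le_card_routes distinct_card[OF rs(1)] set_take_subset[of _ rs]
    unfolding Rs_def by auto
  have "path_edges (route_path (Rs ! i)) \<inter> path_edges (route_path (Rs ! j)) = {}"
    if "i < length Rs" "j < length Rs" "i \<noteq> j" for i j
    using that Rs(1,2) by (intro path_edges_disjoint) (auto simp: nth_eq_iff_index_eq)
  then show ?thesis
    unfolding edge_disjoint_paths_def
    using Rs(2,3) gpath_routes by (intro exI[of _ "map route_path Rs"]) auto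
qed

end

theorem lemma8:
  fixes k :: nat and b :: "nat \<Rightarrow> int" and s s' :: int and u u' :: "nat \<Rightarrow> int"
  defines "F \<equiv> fiber (2*k+1) (4*k+2) (Ak k) b"
      and "Gr \<equiv> graver (2*k+1) (4*k+2) (Ak k)"
  assumes "k \<ge> 1"
      and "b \<in> zvecs (2*k+1)"
      and "u \<in> box k b s" and "u' \<in> box k b s'" and "s \<noteq> s'"
      and "fadj F Gr u u'"
  shows "\<exists>Ps. length Ps = min_degree F Gr \<and>
           (\<forall>p \<in> set Ps. gpath F Gr p u u') \<and>
           (\<forall>i<length Ps. \<forall>j<length Ps. i \<noteq> j \<longrightarrow>
               path_edges (Ps ! i) \<inter> path_edges (Ps ! j) = {})"
proof -
  have u: "u \<in> fiber_A k b" "u (4*k) = s" and u': "u' \<in> fiber_A k b" "u' (4*k) = s'"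
    using assms(5,6) unfolding box_def by auto
  have adj: "fadj (fiber_A k b) (graver_A k) u u'" using assms(8) unfolding F_def Gr_def .
  have "\<not> is_wmove k (\<lambda>n. u' n - u n)"
    using is_wmove_last_zero[of k "\<lambda>n. u' n - u n"] u(2) u'(2) \<open>s \<noteq> s'\<close> by auto
  then consider "is_umove k (\<lambda>n. u' n - u n)" | "is_umove k (\<lambda>n. u n - u' n)"
    using fadj_A_cases[OF adj] by blast
  then have "edge_disjoint_paths (fiber_A k b) (graver_A k) (min_degree (fiber_A k b) (graver_A k)) u u'"
  proof cases
    case 1
    then interpret cross_edge k b u u' using u u' by unfold_locales
    show ?thesis by (rule edge_disjoint_paths_cross_edge)
  next
    case 2
    then interpret cross_edge k b u' u using u u' by unfold_locales
    show ?thesis by (rule edge_disjoint_paths_sym[OF edge_disjoint_paths_cross_edge])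
  qed
  then show ?thesis unfolding edge_disjoint_paths_def F_def Gr_def .
qed

end
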